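(* Let $d,r,L,K_n,k\in\mathbb{N}$, $\alpha\ge1$, $\beta>0$ and $A,B,C\ge1$. Let $\sigma:\mathbb{R}\to\mathbb{R}$ be $k$-times differentiable such that all derivatives up to order $k$ are bounded on $\mathbb{R}$. Let $\mathcal{F}$ be the set of all networks $f_{\mathbf{w}}$ (defined in the context) whose weight vector satisfies $\sum_{j=1}^{K_n}|w^{(L)}_{1,1,j}|\le C$, $|w^{(l)}_{k',i,j}|\le B$ for $k'\in\{1,\dots,K_n\}$, $i,j\in\{1,\dots,r\}$, $l\in\{1,\dots,L-1\}$, and $|w^{(0)}_{k',i,j}|\le A$ for $k'\in\{1,\dots,K_n\}$, $i\in\{1,\dots,r\}$, $j\in\{1,\dots,d\}$. Then for any $1\le p<\infty$, $0<\epsilon<\beta$ and $x_1,\dots,x_n\in\mathbb{R}^d$, \[ \mathcal{N}_p\big(\epsilon,\{T_\beta f\cdot 1_{[-\alpha,\alpha]^d}: f\in\mathcal{F}\},x_1^n\big)\le\Big(c_{11}\cdot\frac{\beta^p}{\epsilon^p}\Big)^{c_{12}\cdot\alpha^d\cdot B^{(L-1)d}\cdot A^d\cdot (C/\epsilon)^{d/k}+c_{13}}, \] where $c_{11},c_{12},c_{13}>0$ are constants not depending on $n,K_n,\alpha,\beta,A,B,C,\epsilon,x_1,\dots,x_n$.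
   Context: For a weight vector $\mathbf{w}=(w^{(l)}_{k,i,j})$ define $f_{\mathbf{w}}(x)=\sum_{j=1}^{K_n} w^{(L)}_{1,1,j}f^{(L)}_{j,1}(x)$ ($x\in\mathbb{R}^d$), where for $k\in\{1,\dots,K_n\}$, $i\in\{1,\dots,r\}$: $f^{(l)}_{k,i}(x)=\sigma\big(\sum_{j=1}^r w^{(l-1)}_{k,i,j}f^{(l-1)}_{k,j}(x)+w^{(l-1)}_{k,i,0}\big)$ for $l=2,\dots,L$ and $f^{(1)}_{k,i}(x)=\sigma\big(\sum_{j=1}^d w^{(0)}_{k,i,j}x^{(j)}+w^{(0)}_{k,i,0}\big)$. For $z\in\mathbb{R}$, $T_\beta z=\max\{-\beta,\min\{\beta,z\}\}$, and $(T_\beta f)(x)=T_\beta(f(x))$. For a class $\mathcal{G}$ of functions $\mathbb{R}^d\to\mathbb{R}$ and $x_1^n=(x_1,\dots,x_n)$, an $L_p$ $\epsilon$-cover of $\mathcal{G}$ on $x_1^n$ is a finite collection $g_1,\dots,g_N$ such that for every $g\in\mathcal{G}$ there is $i$ with $\big(\frac1n\sum_{k=1}^n|g(x_k)-g_i(x_k)|^p\big)^{1/p}<\epsilon$; $\mathcal{N}_p(\epsilon,\mathcal{G},x_1^n)$ is the minimal size of such a cover. *)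

theory Defs
  imports "HOL-Analysis.Analysis"
begin

text \<open>Points of R^d are represented as functions nat => real, coordinates x 1, ..., x d.
  Weights: w l k i j stands for w^{(l)}_{k,i,j}.\<close>

fun nn_unit :: "(real \<Rightarrow> real) \<Rightarrow> nat \<Rightarrow> nat \<Rightarrow> (nat \<Rightarrow> nat \<Rightarrow> nat \<Rightarrow> nat \<Rightarrow> real)
    \<Rightarrow> nat \<Rightarrow> nat \<Rightarrow> nat \<Rightarrow> (nat \<Rightarrow> real) \<Rightarrow> real" where
  "nn_unit \<sigma> d r w 0 k i x = 0"
| "nn_unit \<sigma> d r w (Suc 0) k i x =
     \<sigma> ((\<Sum>j=1..d. w 0 k i j * x j) + w 0 k i 0)"
| "nn_unit \<sigma> d r w (Suc (Suc l)) k i x =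
     \<sigma> ((\<Sum>j=1..r. w (Suc l) k i j * nn_unit \<sigma> d r w (Suc l) k j x) + w (Suc l) k i 0)"

definition nn_net :: "(real \<Rightarrow> real) \<Rightarrow> nat \<Rightarrow> nat \<Rightarrow> nat \<Rightarrow> nat
    \<Rightarrow> (nat \<Rightarrow> nat \<Rightarrow> nat \<Rightarrow> nat \<Rightarrow> real) \<Rightarrow> (nat \<Rightarrow> real) \<Rightarrow> real" where
  "nn_net \<sigma> d r L K w x = (\<Sum>j=1..K. w L 1 1 j * nn_unit \<sigma> d r w L j 1 x)"

definition trunc_beta :: "real \<Rightarrow> real \<Rightarrow> real" where
  "trunc_beta \<beta> z = max (- \<beta>) (min \<beta> z)"

definition cube_ind :: "real \<Rightarrow> nat \<Rightarrow> (nat \<Rightarrow> real) \<Rightarrow> real" where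
  "cube_ind \<alpha> d x = (if \<forall>j\<in>{1..d}. \<bar>x j\<bar> \<le> \<alpha> then 1 else 0)"

definition smooth_bounded_derivs :: "nat \<Rightarrow> (real \<Rightarrow> real) \<Rightarrow> bool" where
  "smooth_bounded_derivs k \<sigma> \<longleftrightarrow> (\<exists>D :: nat \<Rightarrow> real \<Rightarrow> real.
      D 0 = \<sigma> \<and>
      (\<forall>j<k. \<forall>t. (D j has_real_derivative D (Suc j) t) (at t)) \<and>
      (\<forall>j\<le>k. bounded (range (D j))))"

definition admissible_weights :: "nat \<Rightarrow> nat \<Rightarrow> nat \<Rightarrow> nat \<Rightarrow> real \<Rightarrow> real \<Rightarrow> real
    \<Rightarrow> (nat \<Rightarrow> nat \<Rightarrow> nat \<Rightarrow> nat \<Rightarrow> real) \<Rightarrow> bool" where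
  "admissible_weights d r L K A B C w \<longleftrightarrow>
     (\<Sum>j=1..K. \<bar>w L 1 1 j\<bar>) \<le> C \<and>
     (\<forall>k\<in>{1..K}. \<forall>i\<in>{1..r}. \<forall>j\<in>{1..r}. \<forall>l\<in>{1..L-1}. \<bar>w l k i j\<bar> \<le> B) \<and>
     (\<forall>k\<in>{1..K}. \<forall>i\<in>{1..r}. \<forall>j\<in>{1..d}. \<bar>w 0 k i j\<bar> \<le> A)"

definition net_class :: "(real \<Rightarrow> real) \<Rightarrow> nat \<Rightarrow> nat \<Rightarrow> nat \<Rightarrow> nat \<Rightarrow> real \<Rightarrow> real \<Rightarrow> real
    \<Rightarrow> ((nat \<Rightarrow> real) \<Rightarrow> real) set" where
  "net_class \<sigma> d r L K A B C = {nn_net \<sigma> d r L K w | w. admissible_weights d r L K A B C w}"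

definition is_Lp_cover :: "real \<Rightarrow> real \<Rightarrow> ('a \<Rightarrow> real) set \<Rightarrow> nat \<Rightarrow> (nat \<Rightarrow> 'a)
    \<Rightarrow> nat \<Rightarrow> (nat \<Rightarrow> 'a \<Rightarrow> real) \<Rightarrow> bool" where
  "is_Lp_cover p \<epsilon> G n xs N gs \<longleftrightarrow>
     (\<forall>g\<in>G. \<exists>i<N. ((1 / real n) * (\<Sum>m=1..n. \<bar>g (xs m) - gs i (xs m)\<bar> powr p)) powr (1 / p) < \<epsilon>)"

definition covering_number :: "real \<Rightarrow> real \<Rightarrow> ('a \<Rightarrow> real) set \<Rightarrow> nat \<Rightarrow> (nat \<Rightarrow> 'a) \<Rightarrow> nat" where
  "covering_number p \<epsilon> G n xs = (LEAST N. \<exists>gs. is_Lp_cover p \<epsilon> G n xs N gs)"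

end

theory Submission
  imports Defs
begin

text \<open>On a cube of radius \<open>\<rho>\<close>, replacing \<open>\<sigma>\<close> in every layer by its Taylor polynomial of
  degree \<open>k - 1\<close> at the value taken at the centre shows that each network of the class is within
  \<open>C * O((A * B^(L-1) * \<rho>)^k)\<close> of a function that is a polynomial of degree at most \<open>k^L\<close> in
  each coordinate separately. Such a function is controlled on the threefold enlarged cube by its
  values at \<open>(k^L + 1)^d\<close> equispaced nodes (Lagrange interpolation, one coordinate at a time).
  Taking \<open>\<rho>\<close> of order \<open>(\<epsilon>/C)^(1/k) / (A * B^(L-1))\<close>, cover \<open>[-\<alpha>, \<alpha>]^d\<close> by
  \<open>N^d\<close> cells, \<open>N^d\<close> of order \<open>\<alpha>^d * A^d * B^((L-1)*d) * (C/\<epsilon>)^(d/k)\<close>, and record a network by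
  the rounded nodal values of its local polynomials. Passing to an adjacent cell, the new values are
  predicted by the old interpolant up to a bounded number of rounding steps, so there are at most
  \<open>(C/\<epsilon>)^O(1) * O(1)^(N^d)\<close> records. This bounds the uniform covering number on the cube,
  which dominates every empirical \<open>L\<^sub>p\<close> covering number of the truncated class.\<close>

section \<open>Lagrange interpolation\<close>

lemma poly_eq_lagrange_interpolation:
  fixes p :: "real poly"
  assumes "degree p \<le> D"
  shows "poly p z = (\<Sum>\<nu>\<le>D. poly p (real \<nu>) * (\<Prod>\<mu>\<in>{..D}-{\<nu>}. (z - real \<mu>) / (real \<nu> - real \<mu>)))"
proof -
  define q where "q = (\<Sum>\<nu>\<le>D. smult (poly p (real \<nu>))
      (\<Prod>\<mu>\<in>{..D}-{\<nu>}. smult (1 / (real \<nu> - real \<mu>)) [:- real \<mu>, 1:]))"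
  have poly_q: "poly q y = (\<Sum>\<nu>\<le>D. poly p (real \<nu>) * (\<Prod>\<mu>\<in>{..D}-{\<nu>}. (y - real \<mu>) / (real \<nu> - real \<mu>)))"
    for y
    unfolding q_def by (simp add: poly_sum poly_prod diff_divide_distrib add.commute)
  have "degree q \<le> D"
    unfolding q_def
  proof (intro degree_sum_le)
    fix \<nu> assume "\<nu> \<in> {..D}"
    have "degree (\<Prod>\<mu>\<in>{..D}-{\<nu>}. smult (1 / (real \<nu> - real \<mu>)) [:- real \<mu>, 1:]) \<le> (\<Sum>\<mu>\<in>{..D}-{\<nu>}. 1)"
      by (rule order_trans[OF degree_prod_sum_le]) (auto intro!: sum_mono simp: degree_smult_le)
    also have "\<dots> \<le> D" using \<open>\<nu> \<in> {..D}\<close> by simp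
    finally show "degree (smult (poly p (real \<nu>))
        (\<Prod>\<mu>\<in>{..D}-{\<nu>}. smult (1 / (real \<nu> - real \<mu>)) [:- real \<mu>, 1:])) \<le> D"
      using degree_smult_le order_trans by blast
  qed simp
  moreover have "poly q (real n) = poly p (real n)" if "n \<le> D" for n
  proof -
    have "poly q (real n) = (\<Sum>\<nu>\<le>D. if \<nu> = n then poly p (real n) else 0)"
      unfolding poly_q
    proof (rule sum.cong[OF refl])
      fix \<nu> assume "\<nu> \<in> {..D}"
      have "(\<Prod>\<mu>\<in>{..D}-{\<nu>}. (real n - real \<mu>) / (real \<nu> - real \<mu>)) = 0" if "\<nu> \<noteq> n"
        by (rule prod_zero) (use that \<open>n \<le> D\<close> in auto)
      then show "poly p (real \<nu>) * (\<Prod>\<mu>\<in>{..D}-{\<nu>}. (real n - real \<mu>) / (real \<nu> - real \<mu>))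
          = (if \<nu> = n then poly p (real n) else 0)"
        by (auto intro!: prod.neutral)
    qed
    also have "\<dots> = poly p (real n)" using that by simp
    finally show ?thesis .
  qed
  ultimately have "q = p"
    by (intro poly_eqI_degree[of "real ` {..D}"]) (use assms in \<open>auto simp: card_image inj_on_def\<close>)
  then show ?thesis using poly_q by metis
qed

definition lagrange_const :: "nat \<Rightarrow> real" where
  "lagrange_const D = (real D + 1) * (2 * real D) ^ D"

lemma lagrange_const_ge_1: "D \<ge> 1 \<Longrightarrow> lagrange_const D \<ge> 1"
  unfolding lagrange_const_def
  using mult_mono[of 1 "real D + 1" 1 "(2 * real D) ^ D"] one_le_power[of "2 * real D" D] by simp

lemma abs_poly_le_from_integer_nodes:
  fixes p :: "real poly"
  assumes "degree p \<le> D" "D \<ge> 1"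
    and nodes: "\<And>\<nu>. \<nu> \<le> D \<Longrightarrow> \<bar>poly p (real \<nu>)\<bar> \<le> \<delta>"
    and z: "- real D \<le> z" "z \<le> 2 * real D"
  shows "\<bar>poly p z\<bar> \<le> lagrange_const D * \<delta>"
proof -
  have "\<bar>poly p z\<bar> \<le> (\<Sum>\<nu>\<le>D. \<bar>poly p (real \<nu>) * (\<Prod>\<mu>\<in>{..D}-{\<nu>}. (z - real \<mu>) / (real \<nu> - real \<mu>))\<bar>)"
    unfolding poly_eq_lagrange_interpolation[OF assms(1), of z] by (rule sum_abs)
  also have "\<dots> \<le> (\<Sum>\<nu>\<le>D. \<delta> * (2 * real D) ^ D)"
  proof (rule sum_mono)
    fix \<nu> assume \<nu>: "\<nu> \<in> {..D}"
    have "\<bar>\<Prod>\<mu>\<in>{..D}-{\<nu>}. (z - real \<mu>) / (real \<nu> - real \<mu>)\<bar>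
        = (\<Prod>\<mu>\<in>{..D}-{\<nu>}. \<bar>z - real \<mu>\<bar> / \<bar>real \<nu> - real \<mu>\<bar>)"
      by (simp add: abs_prod)
    also have "\<dots> \<le> (2 * real D) ^ D"
    proof (rule prod_le_power)
      fix \<mu> assume \<mu>: "\<mu> \<in> {..D}-{\<nu>}"
      have "\<bar>real \<nu> - real \<mu>\<bar> \<ge> 1" using \<mu> by (auto simp: abs_if)
      then have "\<bar>z - real \<mu>\<bar> / \<bar>real \<nu> - real \<mu>\<bar> \<le> \<bar>z - real \<mu>\<bar> / 1"
        by (intro divide_left_mono) auto
      also have "\<dots> \<le> 2 * real D" using \<mu> z by auto
      finally show "0 \<le> \<bar>z - real \<mu>\<bar> / \<bar>real \<nu> - real \<mu>\<bar> \<and>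
          \<bar>z - real \<mu>\<bar> / \<bar>real \<nu> - real \<mu>\<bar> \<le> 2 * real D"
        by simp
    qed (use \<nu> \<open>D \<ge> 1\<close> in auto)
    finally show "\<bar>poly p (real \<nu>) * (\<Prod>\<mu>\<in>{..D}-{\<nu>}. (z - real \<mu>) / (real \<nu> - real \<mu>))\<bar>
        \<le> \<delta> * (2 * real D) ^ D"
      unfolding abs_mult using nodes[of \<nu>] \<nu> by (intro mult_mono) auto
  qed
  also have "\<dots> = lagrange_const D * \<delta>" by (simp add: lagrange_const_def)
  finally show ?thesis .
qed

lemma abs_poly_le_from_nodes:
  fixes q :: "real poly"
  assumes "degree q \<le> D" "D \<ge> 1" "\<rho> > 0"
    and nodes: "\<And>t. t \<le> D \<Longrightarrow> \<bar>poly q (c - \<rho> + 2 * \<rho> / real D * real t)\<bar> \<le> \<delta>"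
    and s: "\<bar>s - c\<bar> \<le> 3 * \<rho>"
  shows "\<bar>poly q s\<bar> \<le> lagrange_const D * \<delta>"
proof -
  define p where "p = pcompose q [:c - \<rho>, 2 * \<rho> / real D:]"
  have poly_p: "poly p z = poly q (c - \<rho> + 2 * \<rho> / real D * z)" for z
    unfolding p_def by (simp add: poly_pcompose algebra_simps)
  have "degree p \<le> D"
    unfolding p_def using degree_pcompose_le[of q "[:c - \<rho>, 2 * \<rho> / real D:]"] assms(1)
    by (simp add: le_trans)
  define z where "z = (s - (c - \<rho>)) * real D / (2 * \<rho>)"
  have s_eq: "c - \<rho> + 2 * \<rho> / real D * z = s"
    unfolding z_def using assms(2,3) by (simp add: field_simps)
  have "- real D * (2 * \<rho>) \<le> (s - (c - \<rho>)) * real D" "(s - (c - \<rho>)) * real D \<le> 2 * real D * (2 * \<rho>)"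
    using s mult_right_mono[of "- 3 * \<rho>" "s - c" "real D"] mult_right_mono[of "s - c" "3 * \<rho>" "real D"]
    by (auto simp: abs_le_iff algebra_simps)
  then have "- real D \<le> z" "z \<le> 2 * real D"
    unfolding z_def using assms(3) by (simp_all add: pos_le_divide_eq pos_divide_le_eq)
  then have "\<bar>poly p z\<bar> \<le> lagrange_const D * \<delta>"
    by (intro abs_poly_le_from_integer_nodes[OF \<open>degree p \<le> D\<close> assms(2)]) (use nodes poly_p in auto)
  then show ?thesis using poly_p[of z] s_eq by simp
qed


section \<open>Polynomials of bounded degree in each coordinate\<close>

definition coordwise_poly :: "nat \<Rightarrow> nat \<Rightarrow> ((nat \<Rightarrow> real) \<Rightarrow> real) \<Rightarrow> bool" where
  "coordwise_poly d D P \<longleftrightarrow> (\<forall>x y. (\<forall>j\<in>{1..d}. x j = y j) \<longrightarrow> P x = P y) \<and>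
     (\<forall>x. \<forall>i\<in>{1..d}. \<exists>q. degree q \<le> D \<and> (\<forall>t. P (x(i := t)) = poly q t))"

lemma coordwise_poly_cong:
  "coordwise_poly d D P \<Longrightarrow> (\<And>j. j \<in> {1..d} \<Longrightarrow> x j = y j) \<Longrightarrow> P x = P y"
  unfolding coordwise_poly_def by blast

lemma coordwise_poly_slice:
  "coordwise_poly d D P \<Longrightarrow> i \<in> {1..d} \<Longrightarrow> \<exists>q. degree q \<le> D \<and> (\<forall>t. P (x(i := t)) = poly q t)"
  unfolding coordwise_poly_def by blast

lemma coordwise_poly_mono: "coordwise_poly d D P \<Longrightarrow> D \<le> D' \<Longrightarrow> coordwise_poly d D' P"
  unfolding coordwise_poly_def by (meson order_trans)

lemma coordwise_poly_const: "coordwise_poly d D (\<lambda>x. c)"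
  unfolding coordwise_poly_def by (auto intro!: exI[of _ "[:c:]"])

lemma coordwise_poly_add:
  assumes "coordwise_poly d D P" "coordwise_poly d D Q"
  shows "coordwise_poly d D (\<lambda>x. P x + Q x)"
  unfolding coordwise_poly_def
proof (intro conjI allI impI ballI)
  fix x y :: "nat \<Rightarrow> real" assume "\<forall>j\<in>{1..d}. x j = y j"
  then show "P x + Q x = P y + Q y"
    using coordwise_poly_cong[OF assms(1)] coordwise_poly_cong[OF assms(2)] by metis
next
  fix x :: "nat \<Rightarrow> real" and i assume i: "i \<in> {1..d}"
  obtain q1 where "degree q1 \<le> D" "\<forall>t. P (x(i := t)) = poly q1 t"
    using coordwise_poly_slice[OF assms(1) i] by blast
  moreover obtain q2 where "degree q2 \<le> D" "\<forall>t. Q (x(i := t)) = poly q2 t"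
    using coordwise_poly_slice[OF assms(2) i] by blast
  ultimately show "\<exists>q. degree q \<le> D \<and> (\<forall>t. P (x(i := t)) + Q (x(i := t)) = poly q t)"
    by (intro exI[of _ "q1 + q2"]) (auto intro: order_trans[OF degree_add_le])
qed

lemma coordwise_poly_poly_comp:
  assumes "coordwise_poly d D P" "degree r \<le> e"
  shows "coordwise_poly d (e * D) (\<lambda>x. poly r (P x))"
  unfolding coordwise_poly_def
proof (intro conjI allI impI ballI)
  fix x y :: "nat \<Rightarrow> real" assume "\<forall>j\<in>{1..d}. x j = y j"
  then show "poly r (P x) = poly r (P y)" using coordwise_poly_cong[OF assms(1)] by metis
next
  fix x :: "nat \<Rightarrow> real" and i assume i: "i \<in> {1..d}"
  obtain q where q: "degree q \<le> D" "\<forall>t. P (x(i := t)) = poly q t"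
    using coordwise_poly_slice[OF assms(1) i] by blast
  have "degree (pcompose r q) \<le> e * D"
    using degree_pcompose_le[of r q] mult_le_mono[OF assms(2) q(1)] by linarith
  then show "\<exists>q'. degree q' \<le> e * D \<and> (\<forall>t. poly r (P (x(i := t))) = poly q' t)"
    by (intro exI[of _ "pcompose r q"]) (simp add: q poly_pcompose)
qed

lemma coordwise_poly_cmult:
  assumes "coordwise_poly d D P"
  shows "coordwise_poly d D (\<lambda>x. c * P x)"
  using coordwise_poly_poly_comp[OF assms, of "[:0, c:]" 1] by (simp add: mult.commute)

lemma coordwise_poly_sum:
  assumes "finite S" "\<And>j. j \<in> S \<Longrightarrow> coordwise_poly d D (P j)"
  shows "coordwise_poly d D (\<lambda>x. \<Sum>j\<in>S. P j x)"
  using assms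
proof (induction S rule: finite_induct)
  case empty
  show ?case using coordwise_poly_const[of d D 0] by simp
next
  case (insert a F)
  then show ?case using coordwise_poly_add[of d D "P a" "\<lambda>x. \<Sum>j\<in>F. P j x"] by simp
qed

lemma coordwise_poly_coord:
  assumes "j \<in> {1..d}"
  shows "coordwise_poly d 1 (\<lambda>x. x j)"
  unfolding coordwise_poly_def
proof (intro conjI allI impI ballI)
  fix x y :: "nat \<Rightarrow> real" assume "\<forall>j\<in>{1..d}. x j = y j"
  then show "x j = y j" using assms by blast
next
  fix x :: "nat \<Rightarrow> real" and i
  show "\<exists>q. degree q \<le> 1 \<and> (\<forall>t. (x(i := t)) j = poly q t)"
  proof (cases "i = j")
    case True
    then show ?thesis by (intro exI[of _ "[:0, 1:]"]) auto
  next
    case False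
    then show ?thesis by (intro exI[of _ "[:x j:]"]) auto
  qed
qed

lemma coordwise_poly_affine: "coordwise_poly d 1 (\<lambda>x. (\<Sum>j=1..d. a j * x j) + b)"
  by (intro coordwise_poly_add coordwise_poly_const coordwise_poly_sum coordwise_poly_cmult
      coordwise_poly_coord) auto

definition coord_box :: "nat \<Rightarrow> (nat \<Rightarrow> real) \<Rightarrow> real \<Rightarrow> (nat \<Rightarrow> real) set" where
  "coord_box d c s = {x. \<forall>j\<in>{1..d}. \<bar>x j - c j\<bar> \<le> s}"

lemma coord_box_mono: "x \<in> coord_box d c s \<Longrightarrow> s \<le> s' \<Longrightarrow> x \<in> coord_box d c s'"
  unfolding coord_box_def by auto

definition grid_node :: "nat \<Rightarrow> real \<Rightarrow> (nat \<Rightarrow> real) \<Rightarrow> (nat \<Rightarrow> nat) \<Rightarrow> nat \<Rightarrow> real" where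
  "grid_node D \<rho> c t j = c j - \<rho> + 2 * \<rho> / real D * real (t j)"

lemma grid_node_in_coord_box:
  assumes "t \<in> {1..d} \<rightarrow>\<^sub>E {..D}" "D \<ge> 1" "\<rho> > 0"
  shows "grid_node D \<rho> c t \<in> coord_box d c \<rho>"
  unfolding coord_box_def mem_Collect_eq
proof
  fix j assume "j \<in> {1..d}"
  then have "real (t j) \<le> real D" using assms(1) by auto
  then have "2 * \<rho> / real D * real (t j) \<le> 2 * \<rho> / real D * real D"
    using assms(3) by (intro mult_left_mono) auto
  then show "\<bar>grid_node D \<rho> c t j - c j\<bar> \<le> \<rho>"
    using assms(2,3) by (simp add: grid_node_def abs_le_iff)
qed

text \<open>Applying the one-dimensional bound coordinate by coordinate costs one factor
  \<open>lagrange_const D\<close> per coordinate.\<close>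

lemma coordwise_poly_abs_le_on_box:
  assumes P: "coordwise_poly d D P" and "D \<ge> 1" "\<rho> > 0"
    and nodes: "\<And>t. t \<in> {1..d} \<rightarrow>\<^sub>E {..D} \<Longrightarrow> \<bar>P (grid_node D \<rho> c t)\<bar> \<le> \<delta>"
    and x: "x \<in> coord_box d c (3 * \<rho>)"
  shows "\<bar>P x\<bar> \<le> lagrange_const D ^ d * \<delta>"
proof -
  have "\<bar>P y\<bar> \<le> lagrange_const D ^ j * \<delta>"
    if "j \<le> d" "\<forall>i\<in>{1..j}. \<bar>y i - c i\<bar> \<le> 3 * \<rho>"
      "t \<in> {1..d} \<rightarrow>\<^sub>E {..D}" "\<forall>i\<in>{j<..d}. y i = grid_node D \<rho> c t i" for j y t
    using that
  proof (induction j arbitrary: y t)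
    case 0
    then have "P y = P (grid_node D \<rho> c t)" by (intro coordwise_poly_cong[OF P]) auto
    then show ?case using nodes[OF \<open>t \<in> _\<close>] by simp
  next
    case (Suc j)
    obtain q where q: "degree q \<le> D" "\<forall>s. P (y(Suc j := s)) = poly q s"
      using coordwise_poly_slice[OF P, of "Suc j"] Suc.prems(1) by auto
    have "\<bar>poly q (y (Suc j))\<bar> \<le> lagrange_const D * (lagrange_const D ^ j * \<delta>)"
    proof (rule abs_poly_le_from_nodes[OF q(1) \<open>D \<ge> 1\<close> \<open>\<rho> > 0\<close>])
      fix \<tau> assume "\<tau> \<le> D"
      have "\<bar>P (y(Suc j := grid_node D \<rho> c (t(Suc j := \<tau>)) (Suc j)))\<bar> \<le> lagrange_const D ^ j * \<delta>"
        using Suc.prems \<open>\<tau> \<le> D\<close>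
        by (intro Suc.IH[where t = "t(Suc j := \<tau>)"]) (auto simp: PiE_iff extensional_def grid_node_def)
      then show "\<bar>poly q (c (Suc j) - \<rho> + 2 * \<rho> / real D * real \<tau>)\<bar> \<le> lagrange_const D ^ j * \<delta>"
        using q(2) by (simp add: grid_node_def)
    qed (use Suc.prems in auto)
    moreover have "P y = poly q (y (Suc j))" using q(2)[rule_format, of "y (Suc j)"] by simp
    ultimately show ?case by (simp add: mult.assoc)
  qed
  from this[of d x "\<lambda>i\<in>{1..d}. 0"] show ?thesis
    using x unfolding coord_box_def by auto
qed

section \<open>Taylor approximation of the activation function\<close>

definition taylor_poly :: "(nat \<Rightarrow> real \<Rightarrow> real) \<Rightarrow> nat \<Rightarrow> real \<Rightarrow> real poly" where
  "taylor_poly Dd k u = (\<Sum>m<k. smult (Dd m u / fact m) ([:- u, 1:] ^ m))"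

lemma poly_taylor_poly: "poly (taylor_poly Dd k u) v = (\<Sum>m<k. Dd m u / fact m * (v - u) ^ m)"
  unfolding taylor_poly_def by (simp add: poly_sum)

lemma degree_taylor_poly: "degree (taylor_poly Dd k u) \<le> k - 1"
  unfolding taylor_poly_def
proof (rule degree_sum_le)
  fix m assume "m \<in> {..<k}"
  then have "degree ([:- u, 1:] ^ m) \<le> k - 1"
    using degree_power_le[of "[:- u, 1:]" m] by auto
  then show "degree (smult (Dd m u / fact m) ([:- u, 1:] ^ m)) \<le> k - 1"
    using degree_smult_le order_trans by blast
qed simp

locale bounded_derivatives =
  fixes \<sigma> :: "real \<Rightarrow> real" and Dd :: "nat \<Rightarrow> real \<Rightarrow> real" and k :: nat and M :: real
  assumes k_ge_1: "k \<ge> 1" and M_ge_1: "M \<ge> 1" and Dd_0: "Dd 0 = \<sigma>"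
    and Dd_deriv: "\<And>j t. j < k \<Longrightarrow> (Dd j has_real_derivative Dd (Suc j) t) (at t)"
    and Dd_bounded: "\<And>j t. j \<le> k \<Longrightarrow> \<bar>Dd j t\<bar> \<le> M"
begin

lemma abs_taylor_remainder_le:
  assumes "1 \<le> n" "n \<le> k"
  shows "\<bar>\<sigma> v - (\<Sum>m<n. Dd m u / fact m * (v - u) ^ m)\<bar> \<le> M * \<bar>v - u\<bar> ^ n"
proof (cases "v = u")
  case True
  have "(\<Sum>m<n. Dd m u / fact m * (v - u) ^ m) = (\<Sum>m\<in>{0}. Dd m u / fact m * (v - u) ^ m)"
    by (rule sum.mono_neutral_right) (use assms True in auto)
  then show ?thesis using True Dd_0 assms M_ge_1 by (simp add: zero_power)
next
  case False
  obtain t where t: "\<sigma> v = (\<Sum>m<n. Dd m u / fact m * (v - u) ^ m) + Dd n t / fact n * (v - u) ^ n"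
    using Taylor[of n Dd \<sigma> "min u v" "max u v" u v] assms False Dd_0 Dd_deriv by fastforce
  have "\<bar>Dd n t / fact n * (v - u) ^ n\<bar> = \<bar>Dd n t\<bar> / fact n * \<bar>v - u\<bar> ^ n"
    by (simp add: abs_mult power_abs)
  also have "\<dots> \<le> M / 1 * \<bar>v - u\<bar> ^ n"
    using Dd_bounded[of n t] assms by (intro mult_right_mono frac_le) (auto simp: fact_ge_1)
  finally show ?thesis using t by simp
qed

lemma abs_sigma_minus_taylor_poly_le: "\<bar>\<sigma> v - poly (taylor_poly Dd k u) v\<bar> \<le> M * \<bar>v - u\<bar> ^ k"
  using abs_taylor_remainder_le[of k v u] k_ge_1 unfolding poly_taylor_poly by simp

lemma sigma_lipschitz: "\<bar>\<sigma> v - \<sigma> u\<bar> \<le> M * \<bar>v - u\<bar>"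
  using abs_taylor_remainder_le[of 1 v u] k_ge_1 Dd_0 by simp

lemma abs_sigma_le: "\<bar>\<sigma> t\<bar> \<le> M"
  using Dd_bounded[of 0 t] Dd_0 by simp

end

lemma smooth_bounded_derivs_obtain_bound:
  assumes "smooth_bounded_derivs k \<sigma>" "k \<ge> 1"
  obtains Dd M where "bounded_derivatives \<sigma> Dd k M"
proof -
  obtain Dd where Dd: "Dd 0 = \<sigma>" "\<forall>j<k. \<forall>t. (Dd j has_real_derivative Dd (Suc j) t) (at t)"
    "\<forall>j\<le>k. bounded (range (Dd j))"
    using assms(1) unfolding smooth_bounded_derivs_def by blast
  have "\<forall>j\<in>{..k}. \<exists>b. \<forall>t. \<bar>Dd j t\<bar> \<le> b"
    using Dd(3) by (fastforce simp: bounded_iff)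
  then obtain b where b: "\<And>j t. j \<le> k \<Longrightarrow> \<bar>Dd j t\<bar> \<le> b j" by (metis atMost_iff)
  define M where "M = 1 + (\<Sum>j\<le>k. \<bar>b j\<bar>)"
  have "\<bar>Dd j t\<bar> \<le> M" if "j \<le> k" for j t
  proof -
    have "\<bar>b j\<bar> \<le> (\<Sum>j\<le>k. \<bar>b j\<bar>)" by (rule member_le_sum) (use that in auto)
    then show ?thesis using b[OF that, of t] by (simp add: M_def)
  qed
  moreover have "M \<ge> 1" by (simp add: M_def sum_nonneg)
  ultimately have "bounded_derivatives \<sigma> Dd k M"
    using Dd assms(2) by unfold_locales auto
  then show ?thesis by (rule that)
qed

section \<open>Local polynomial approximation of networks\<close>

lemma abs_sum_mult_le:
  fixes c g :: "'i \<Rightarrow> real"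
  assumes "\<And>j. j \<in> J \<Longrightarrow> \<bar>g j\<bar> \<le> a"
  shows "\<bar>\<Sum>j\<in>J. c j * g j\<bar> \<le> (\<Sum>j\<in>J. \<bar>c j\<bar>) * a"
proof -
  have "\<bar>\<Sum>j\<in>J. c j * g j\<bar> \<le> (\<Sum>j\<in>J. \<bar>c j\<bar> * \<bar>g j\<bar>)"
    using sum_abs[of "\<lambda>j. c j * g j" J] by (simp add: abs_mult)
  also have "\<dots> \<le> (\<Sum>j\<in>J. \<bar>c j\<bar> * a)"
    using assms by (intro sum_mono mult_left_mono) auto
  finally show ?thesis by (simp add: sum_distrib_right)
qed

definition poly_approx_on ::
    "nat \<Rightarrow> nat \<Rightarrow> (nat \<Rightarrow> real) set \<Rightarrow> ((nat \<Rightarrow> real) \<Rightarrow> real) \<Rightarrow> real \<Rightarrow> bool" where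
  "poly_approx_on d D S f e \<longleftrightarrow> (\<exists>P. coordwise_poly d D P \<and> (\<forall>x\<in>S. \<bar>f x - P x\<bar> \<le> e))"

lemma poly_approx_on_mono:
  "poly_approx_on d D S f e \<Longrightarrow> D \<le> D' \<Longrightarrow> e \<le> e' \<Longrightarrow> poly_approx_on d D' S f e'"
  unfolding poly_approx_on_def by (meson coordwise_poly_mono order_trans)

lemma poly_approx_on_lincomb:
  assumes "finite J" "\<And>j. j \<in> J \<Longrightarrow> poly_approx_on d D S (h j) e"
  shows "poly_approx_on d D S (\<lambda>x. (\<Sum>j\<in>J. c j * h j x) + c0) ((\<Sum>j\<in>J. \<bar>c j\<bar>) * e)"
proof -
  obtain P where P: "\<And>j. j \<in> J \<Longrightarrow> coordwise_poly d D (P j)"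
    "\<And>j x. j \<in> J \<Longrightarrow> x \<in> S \<Longrightarrow> \<bar>h j x - P j x\<bar> \<le> e"
    using assms(2) unfolding poly_approx_on_def by metis
  have "coordwise_poly d D (\<lambda>x. (\<Sum>j\<in>J. c j * P j x) + c0)"
    by (intro coordwise_poly_add coordwise_poly_sum coordwise_poly_cmult coordwise_poly_const P assms(1))
  moreover have "\<bar>((\<Sum>j\<in>J. c j * h j x) + c0) - ((\<Sum>j\<in>J. c j * P j x) + c0)\<bar> \<le> (\<Sum>j\<in>J. \<bar>c j\<bar>) * e"
    if "x \<in> S" for x
    using abs_sum_mult_le[of J "\<lambda>j. h j x - P j x" e c] P(2) that
    by (simp add: sum_subtractf right_diff_distrib)
  ultimately show ?thesis unfolding poly_approx_on_def by blast
qed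

context bounded_derivatives
begin

text \<open>The approximant is the Taylor polynomial of \<open>\<sigma>\<close> at \<open>v x0\<close> composed with the
  approximant of \<open>v\<close>.\<close>

lemma sigma_comp_poly_approx_on:
  assumes "poly_approx_on d D S v e" and osc: "\<And>x. x \<in> S \<Longrightarrow> \<bar>v x - v x0\<bar> \<le> a"
  shows "poly_approx_on d (k * D) S (\<lambda>x. \<sigma> (v x)) (M * e + M * (e + a) ^ k)"
proof -
  obtain V where V: "coordwise_poly d D V" "\<And>x. x \<in> S \<Longrightarrow> \<bar>v x - V x\<bar> \<le> e"
    using assms(1) unfolding poly_approx_on_def by blast
  define P where "P x = poly (taylor_poly Dd k (v x0)) (V x)" for x
  have "coordwise_poly d ((k - 1) * D) P"
    unfolding P_def by (rule coordwise_poly_poly_comp[OF V(1) degree_taylor_poly])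
  then have "coordwise_poly d (k * D) P" by (rule coordwise_poly_mono) auto
  moreover have "\<bar>\<sigma> (v x) - P x\<bar> \<le> M * e + M * (e + a) ^ k" if "x \<in> S" for x
  proof -
    have "\<bar>\<sigma> (v x) - \<sigma> (V x)\<bar> \<le> M * e"
      using sigma_lipschitz[of "v x" "V x"] V(2)[OF that] M_ge_1
      by (smt (verit) abs_minus_commute mult_left_mono)
    moreover have "\<bar>\<sigma> (V x) - P x\<bar> \<le> M * (e + a) ^ k"
    proof -
      have "\<bar>V x - v x0\<bar> \<le> e + a" using V(2)[OF that] osc[OF that] by linarith
      then have "M * \<bar>V x - v x0\<bar> ^ k \<le> M * (e + a) ^ k"
        using M_ge_1 by (intro mult_left_mono power_mono) auto
      then show ?thesis unfolding P_def using abs_sigma_minus_taylor_poly_le order_trans by blast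
    qed
    ultimately show ?thesis by linarith
  qed
  ultimately show ?thesis unfolding poly_approx_on_def by blast
qed

end

text \<open>The oscillation of a unit of layer \<open>l\<close> on a box of radius \<open>\<rho>\<close>, and its distance to
  coordinatewise polynomials, in units of \<open>\<theta>\<close> and \<open>\<theta>^k\<close> where \<open>\<theta> = A * B^(l-1) * \<rho>\<close>.\<close>

fun unit_osc_const :: "real \<Rightarrow> nat \<Rightarrow> nat \<Rightarrow> nat \<Rightarrow> real" where
  "unit_osc_const M d r 0 = 0"
| "unit_osc_const M d r (Suc 0) = M * real d"
| "unit_osc_const M d r (Suc (Suc l)) = M * real r * unit_osc_const M d r (Suc l)"

fun unit_err_const :: "real \<Rightarrow> nat \<Rightarrow> nat \<Rightarrow> nat \<Rightarrow> nat \<Rightarrow> real" where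
  "unit_err_const M d r k 0 = 0"
| "unit_err_const M d r k (Suc 0) = M * real d ^ k"
| "unit_err_const M d r k (Suc (Suc l)) = M * real r * unit_err_const M d r k (Suc l)
     + M * (real r * (unit_err_const M d r k (Suc l) + unit_osc_const M d r (Suc l))) ^ k"

lemma unit_osc_const_nonneg: "M \<ge> 0 \<Longrightarrow> unit_osc_const M d r l \<ge> 0"
  by (induction M d r l rule: unit_osc_const.induct) auto

lemma unit_err_const_nonneg: "M \<ge> 0 \<Longrightarrow> unit_err_const M d r k l \<ge> 0"
  by (induction M d r k l rule: unit_err_const.induct) (auto simp: unit_osc_const_nonneg)

lemma unit_err_const_step:
  fixes M r B \<theta> E Lo :: real
  assumes "M \<ge> 0" "r \<ge> 0" "B \<ge> 1" "\<theta> \<ge> 0" "B * \<theta> \<le> 1" "E \<ge> 0" "Lo \<ge> 0" "k \<ge> 1"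
  shows "M * (r * B * (E * \<theta> ^ k)) + M * (r * B * (E * \<theta> ^ k) + r * B * (Lo * \<theta>)) ^ k
    \<le> (M * r * E + M * (r * (E + Lo)) ^ k) * (B * \<theta>) ^ k"
proof -
  have "B * \<theta> ^ k \<le> (B * \<theta>) ^ k"
    using power_increasing[of 1 k B] assms by (simp add: power_mult_distrib mult_right_mono)
  then have e: "r * B * (E * \<theta> ^ k) \<le> r * E * (B * \<theta>) ^ k"
    using mult_left_mono[of "B * \<theta> ^ k" "(B * \<theta>) ^ k" "r * E"] assms by (simp add: mult_ac)
  have "\<theta> \<le> 1" using assms mult_right_mono[of 1 B \<theta>] by simp
  then have "\<theta> ^ k \<le> \<theta>" using power_decreasing[of 1 k \<theta>] assms by simp
  then have "r * B * (E * \<theta> ^ k) \<le> r * B * (E * \<theta>)"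
    using assms by (intro mult_left_mono) auto
  then have "r * B * (E * \<theta> ^ k) + r * B * (Lo * \<theta>) \<le> r * (E + Lo) * (B * \<theta>)"
    by (simp add: algebra_simps)
  then have "(r * B * (E * \<theta> ^ k) + r * B * (Lo * \<theta>)) ^ k \<le> (r * (E + Lo)) ^ k * (B * \<theta>) ^ k"
    using assms by (simp add: power_mono flip: power_mult_distrib)
  with e show ?thesis
    using assms by (simp add: distrib_right mult_left_mono add_mono mult.assoc)
qed

context bounded_derivatives
begin

lemma nn_unit_first_layer_local_approx:
  assumes w: "admissible_weights d r L K A B C w" and "kk \<in> {1..K}" "i \<in> {1..r}" "\<rho> > 0"
  shows "(\<forall>x\<in>coord_box d x0 \<rho>. \<bar>nn_unit \<sigma> d r w 1 kk i x - nn_unit \<sigma> d r w 1 kk i x0\<bar>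
            \<le> unit_osc_const M d r 1 * (A * \<rho>))
       \<and> poly_approx_on d k (coord_box d x0 \<rho>) (nn_unit \<sigma> d r w 1 kk i)
            (unit_err_const M d r k 1 * (A * \<rho>) ^ k)"
proof -
  define u where "u x = (\<Sum>j=1..d. w 0 kk i j * x j) + w 0 kk i 0" for x :: "nat \<Rightarrow> real"
  have unit_eq: "nn_unit \<sigma> d r w 1 kk i = (\<lambda>x. \<sigma> (u x))" by (rule ext) (simp add: u_def)
  have "(\<Sum>j=1..d. \<bar>w 0 kk i j\<bar>) \<le> real d * A"
    using w assms(2,3) sum_bounded_above[of "{1..d}" "\<lambda>j. \<bar>w 0 kk i j\<bar>" A]
    unfolding admissible_weights_def by auto
  then have osc: "\<bar>u x - u x0\<bar> \<le> real d * A * \<rho>" if "x \<in> coord_box d x0 \<rho>" for x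
    using abs_sum_mult_le[of "{1..d}" "\<lambda>j. x j - x0 j" \<rho> "w 0 kk i"] that \<open>\<rho> > 0\<close>
    unfolding coord_box_def u_def
    by (simp add: sum_subtractf right_diff_distrib order_trans[OF _ mult_right_mono])
  have "poly_approx_on d 1 (coord_box d x0 \<rho>) u 0"
    unfolding poly_approx_on_def u_def using coordwise_poly_affine by fastforce
  from sigma_comp_poly_approx_on[OF this osc]
  have "poly_approx_on d k (coord_box d x0 \<rho>) (\<lambda>x. \<sigma> (u x)) (M * real d ^ k * (A * \<rho>) ^ k)"
    by (simp add: power_mult_distrib mult_ac)
  moreover have "\<bar>\<sigma> (u x) - \<sigma> (u x0)\<bar> \<le> M * real d * (A * \<rho>)" if "x \<in> coord_box d x0 \<rho>" for x
    using sigma_lipschitz[of "u x" "u x0"] osc[OF that] M_ge_1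
    by (smt (verit) mult.assoc mult_left_mono)
  ultimately show ?thesis using unit_eq by simp
qed

lemma nn_unit_next_layer_local_approx:
  assumes w: "admissible_weights d r L K A B C w" and "kk \<in> {1..K}" "i \<in> {1..r}"
    and "1 \<le> l" "l < L" "B \<ge> 1" "\<theta> \<ge> 0" "B * \<theta> \<le> 1"
    and prev: "\<And>j. j \<in> {1..r} \<Longrightarrow>
        (\<forall>x\<in>S. \<bar>nn_unit \<sigma> d r w l kk j x - nn_unit \<sigma> d r w l kk j x0\<bar> \<le> unit_osc_const M d r l * \<theta>)
      \<and> poly_approx_on d (k ^ l) S (nn_unit \<sigma> d r w l kk j) (unit_err_const M d r k l * \<theta> ^ k)"
  shows "(\<forall>x\<in>S. \<bar>nn_unit \<sigma> d r w (Suc l) kk i x - nn_unit \<sigma> d r w (Suc l) kk i x0\<bar>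
            \<le> unit_osc_const M d r (Suc l) * (B * \<theta>))
       \<and> poly_approx_on d (k ^ Suc l) S (nn_unit \<sigma> d r w (Suc l) kk i)
            (unit_err_const M d r k (Suc l) * (B * \<theta>) ^ k)"
proof -
  obtain l' where l': "l = Suc l'" using assms(4) by (cases l) auto
  define v where "v x = (\<Sum>j=1..r. w l kk i j * nn_unit \<sigma> d r w l kk j x) + w l kk i 0" for x
  have unit_eq: "nn_unit \<sigma> d r w (Suc l) kk i = (\<lambda>x. \<sigma> (v x))" by (rule ext) (simp add: v_def l')
  have weights: "(\<Sum>j=1..r. \<bar>w l kk i j\<bar>) \<le> real r * B"
    using w assms(2-5) sum_bounded_above[of "{1..r}" "\<lambda>j. \<bar>w l kk i j\<bar>" B]
    unfolding admissible_weights_def by auto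
  define Lo where "Lo = unit_osc_const M d r l"
  define E where "E = unit_err_const M d r k l"
  have "Lo \<ge> 0" "E \<ge> 0"
    using M_ge_1 unit_osc_const_nonneg unit_err_const_nonneg by (auto simp: Lo_def E_def)
  have osc: "\<bar>v x - v x0\<bar> \<le> real r * B * (Lo * \<theta>)" if "x \<in> S" for x
  proof -
    have "\<bar>v x - v x0\<bar> \<le> (\<Sum>j=1..r. \<bar>w l kk i j\<bar>) * (Lo * \<theta>)"
      using abs_sum_mult_le[of "{1..r}" "\<lambda>j. nn_unit \<sigma> d r w l kk j x - nn_unit \<sigma> d r w l kk j x0"
          "Lo * \<theta>" "w l kk i"] prev that
      unfolding v_def Lo_def by (simp add: sum_subtractf right_diff_distrib)
    also have "\<dots> \<le> real r * B * (Lo * \<theta>)"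
      using weights \<open>Lo \<ge> 0\<close> \<open>\<theta> \<ge> 0\<close> by (intro mult_right_mono) auto
    finally show ?thesis .
  qed
  have "poly_approx_on d (k ^ l) S v ((\<Sum>j=1..r. \<bar>w l kk i j\<bar>) * (E * \<theta> ^ k))"
    unfolding v_def E_def by (intro poly_approx_on_lincomb) (use prev in auto)
  then have "poly_approx_on d (k ^ l) S v (real r * B * (E * \<theta> ^ k))"
    by (rule poly_approx_on_mono) (use weights \<open>E \<ge> 0\<close> \<open>\<theta> \<ge> 0\<close> in \<open>auto intro: mult_right_mono\<close>)
  from sigma_comp_poly_approx_on[OF this osc]
  have "poly_approx_on d (k ^ Suc l) S (\<lambda>x. \<sigma> (v x)) (unit_err_const M d r k (Suc l) * (B * \<theta>) ^ k)"
    by (rule poly_approx_on_mono)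
      (use unit_err_const_step[of M "real r" B \<theta> E Lo k] M_ge_1 k_ge_1 assms(6-8) \<open>E \<ge> 0\<close> \<open>Lo \<ge> 0\<close>
        in \<open>auto simp: l' E_def Lo_def\<close>)
  moreover have "\<bar>\<sigma> (v x) - \<sigma> (v x0)\<bar> \<le> unit_osc_const M d r (Suc l) * (B * \<theta>)" if "x \<in> S" for x
    using sigma_lipschitz[of "v x" "v x0"] osc[OF that] M_ge_1
    by (simp add: l' Lo_def) (smt (verit) mult.assoc mult.left_commute mult_left_mono)
  ultimately show ?thesis using unit_eq by simp
qed

lemma nn_unit_local_approx:
  assumes w: "admissible_weights d r L K A B C w" and "A \<ge> 0" "B \<ge> 1" "\<rho> > 0" "kk \<in> {1..K}"
    and "1 \<le> l" "l \<le> L" "A * B ^ (l - 1) * \<rho> \<le> 1" "i \<in> {1..r}"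
  shows "(\<forall>x\<in>coord_box d x0 \<rho>. \<bar>nn_unit \<sigma> d r w l kk i x - nn_unit \<sigma> d r w l kk i x0\<bar>
            \<le> unit_osc_const M d r l * (A * B ^ (l - 1) * \<rho>))
       \<and> poly_approx_on d (k ^ l) (coord_box d x0 \<rho>) (nn_unit \<sigma> d r w l kk i)
            (unit_err_const M d r k l * (A * B ^ (l - 1) * \<rho>) ^ k)"
  using assms(6-)
proof (induction l arbitrary: i)
  case 0
  then show ?case by simp
next
  case (Suc l)
  show ?case
  proof (cases "l = 0")
    case True
    then show ?thesis using nn_unit_first_layer_local_approx[OF w \<open>kk \<in> _\<close> Suc.prems(4) \<open>\<rho> > 0\<close>]
      by (simp del: nn_unit.simps)
  next
    case False
    let ?\<theta> = "A * B ^ (l - 1) * \<rho>"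
    have \<theta>_Suc: "A * B ^ (Suc l - 1) * \<rho> = B * ?\<theta>" using False by (cases l) auto
    have "?\<theta> \<ge> 0" using assms(2-4) by simp
    moreover have "B * ?\<theta> \<le> 1" using Suc.prems(3) by (simp only: \<theta>_Suc)
    moreover from calculation have "?\<theta> \<le> 1" using \<open>B \<ge> 1\<close> mult_right_mono[of 1 B ?\<theta>] by simp
    ultimately show ?thesis
      unfolding \<theta>_Suc using Suc False \<open>B \<ge> 1\<close>
      by (intro nn_unit_next_layer_local_approx[OF w \<open>kk \<in> _\<close>]) auto
  qed
qed

lemma nn_net_local_approx:
  assumes w: "admissible_weights d r L K A B C w" and "A \<ge> 0" "B \<ge> 1" "\<rho> > 0" "L \<ge> 1" "r \<ge> 1"
    and "A * B ^ (L - 1) * \<rho> \<le> 1"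
  shows "poly_approx_on d (k ^ L) (coord_box d x0 \<rho>) (nn_net \<sigma> d r L K w)
           (C * (unit_err_const M d r k L * (A * B ^ (L - 1) * \<rho>) ^ k))"
proof -
  have "poly_approx_on d (k ^ L) (coord_box d x0 \<rho>) (\<lambda>x. (\<Sum>j=1..K. w L 1 1 j * nn_unit \<sigma> d r w L j 1 x) + 0)
      ((\<Sum>j=1..K. \<bar>w L 1 1 j\<bar>) * (unit_err_const M d r k L * (A * B ^ (L - 1) * \<rho>) ^ k))"
    using nn_unit_local_approx[OF assms(1-4)] assms(5-7) by (intro poly_approx_on_lincomb) auto
  moreover have "0 \<le> unit_err_const M d r k L * (A * B ^ (L - 1) * \<rho>) ^ k"
    using unit_err_const_nonneg M_ge_1 assms(2-4) by simp
  ultimately show ?thesis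
    using w unfolding admissible_weights_def nn_net_def[abs_def]
    by (auto elim: poly_approx_on_mono intro: mult_right_mono)
qed

lemma nn_unit_abs_le:
  assumes "l \<ge> 1"
  shows "\<bar>nn_unit \<sigma> d r w l kk i x\<bar> \<le> M"
proof -
  obtain l' where "l = Suc l'" using assms by (cases l) auto
  then show ?thesis by (cases l') (simp_all add: abs_sigma_le)
qed

lemma nn_net_abs_le:
  assumes "admissible_weights d r L K A B C w" "L \<ge> 1"
  shows "\<bar>nn_net \<sigma> d r L K w x\<bar> \<le> C * M"
proof -
  have "\<bar>nn_net \<sigma> d r L K w x\<bar> \<le> (\<Sum>j=1..K. \<bar>w L 1 1 j\<bar>) * M"
    unfolding nn_net_def using assms(2) by (intro abs_sum_mult_le nn_unit_abs_le)
  also have "\<dots> \<le> C * M"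
    using assms(1) M_ge_1 unfolding admissible_weights_def by (intro mult_right_mono) auto
  finally show ?thesis .
qed

end

section \<open>Uniform covers of classes with local polynomial approximations\<close>

lemma abs_sub_round_divide_le:
  fixes \<eta> :: real
  assumes "\<eta> > 0"
  shows "\<bar>p - \<eta> * of_int (round (p / \<eta>))\<bar> \<le> \<eta> / 2"
proof -
  have "\<eta> * \<bar>of_int (round (p / \<eta>)) - p / \<eta>\<bar> \<le> \<eta> * (1 / 2)"
    using of_int_round_abs_le[of "p / \<eta>"] assms by (intro mult_left_mono) auto
  moreover have "\<eta> * \<bar>of_int (round (p / \<eta>)) - p / \<eta>\<bar> = \<bar>\<eta> * (of_int (round (p / \<eta>)) - p / \<eta>)\<bar>"
    using assms by (simp add: abs_mult)
  moreover have "\<eta> * (of_int (round (p / \<eta>)) - p / \<eta>) = - (p - \<eta> * of_int (round (p / \<eta>)))"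
    using assms by (simp add: right_diff_distrib)
  ultimately show ?thesis by (simp add: abs_minus_commute)
qed

lemma abs_round_diff_le: "\<bar>real_of_int (round a - round b)\<bar> \<le> \<bar>a - b\<bar> + 1"
  using of_int_round_abs_le[of a] of_int_round_abs_le[of b] by linarith

lemma real_nat_ceiling_le: "z \<ge> 0 \<Longrightarrow> real (nat \<lceil>z\<rceil>) \<le> z + 1"
  by linarith

lemma mem_nat_ceiling_range:
  fixes i :: int
  assumes "\<bar>real_of_int i\<bar> \<le> b"
  shows "i \<in> {- int (nat \<lceil>b\<rceil>)..int (nat \<lceil>b\<rceil>)}"
proof -
  have "\<bar>i\<bar> \<le> \<lceil>b\<rceil>" using assms by (simp add: le_ceiling_iff)
  moreover have "0 \<le> b" using assms abs_ge_zero order_trans by blast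
  ultimately show ?thesis by auto
qed

text \<open>\<open>encode\<close> keeps the record of the root cell and, for every other cell, only the deviation
  from the values predicted by the interpolant of its parent cell (adjacent in one coordinate);
  these deviations are small integers, and they determine the record.\<close>

locale locally_poly_class =
  fixes d D :: nat and \<alpha> \<rho> \<eta> E Fb :: real and F :: "((nat \<Rightarrow> real) \<Rightarrow> real) set"
  assumes D_ge_1: "D \<ge> 1" and \<alpha>_pos: "\<alpha> > 0" and \<rho>_pos: "\<rho> > 0" and \<eta>_pos: "\<eta> > 0"
    and approx: "\<And>f c. f \<in> F \<Longrightarrow> poly_approx_on d D (coord_box d c (3 * \<rho>)) f E"
    and bounded: "\<And>f x. f \<in> F \<Longrightarrow> \<bar>f x\<bar> \<le> Fb"
begin

definition "n_cells = nat \<lceil>\<alpha> / \<rho>\<rceil>"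
definition "cells = {1..d} \<rightarrow>\<^sub>E {..<n_cells}"
definition "nodes = {1..d} \<rightarrow>\<^sub>E {..D}"
definition "center \<nu> j = - \<alpha> + (2 * real (\<nu> j) + 1) * \<rho>"
definition "node \<nu> = grid_node D \<rho> (center \<nu>)"
definition "root_cell = (\<lambda>j\<in>{1..d}. 0 :: nat)"
definition "parent_axis \<nu> = (LEAST j. j \<in> {1..d} \<and> 0 < \<nu> j)"
definition "parent \<nu> = \<nu>(parent_axis \<nu> := \<nu> (parent_axis \<nu>) - 1)"
definition "cell_of x = (\<lambda>j\<in>{1..d}. min (n_cells - 1) (nat \<lfloor>(x j + \<alpha>) / (2 * \<rho>)\<rfloor>))"

definition "local_poly f \<nu> =
  (SOME P. coordwise_poly d D P \<and> (\<forall>x\<in>coord_box d (center \<nu>) (3 * \<rho>). \<bar>f x - P x\<bar> \<le> E))"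
definition "quantize f = (\<lambda>\<nu>\<in>cells. \<lambda>t\<in>nodes. round (local_poly f \<nu> (node \<nu> t) / \<eta>))"
definition "interpolant \<nu> m =
  (SOME Q. coordwise_poly d D Q \<and> (\<forall>t\<in>nodes. \<bar>Q (node \<nu> t) - \<eta> * of_int (m t)\<bar> \<le> \<eta> / 2))"
definition "decode q x = interpolant (cell_of x) (q (cell_of x)) x"
definition "predicted q \<nu> t = round (interpolant (parent \<nu>) (q (parent \<nu>)) (node \<nu> t) / \<eta>)"
definition "encode q = (\<lambda>t\<in>nodes. q root_cell t,
  \<lambda>\<nu>\<in>cells. \<lambda>t\<in>nodes. if \<nu> = root_cell then 0 else q \<nu> t - predicted q \<nu> t)"

definition "root_range = nat \<lceil>(Fb + E) / \<eta> + 1\<rceil>"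
definition "step_range = nat \<lceil>1 + lagrange_const D ^ d + 2 * E / \<eta>\<rceil>"
definition "code_space = (nodes \<rightarrow>\<^sub>E {- int root_range..int root_range})
  \<times> (cells \<rightarrow>\<^sub>E nodes \<rightarrow>\<^sub>E {- int step_range..int step_range})"

lemma local_poly_spec:
  assumes "f \<in> F"
  shows "coordwise_poly d D (local_poly f \<nu>)"
    "\<And>x. x \<in> coord_box d (center \<nu>) (3 * \<rho>) \<Longrightarrow> \<bar>f x - local_poly f \<nu> x\<bar> \<le> E"
proof -
  have "\<exists>P. coordwise_poly d D P \<and> (\<forall>x\<in>coord_box d (center \<nu>) (3 * \<rho>). \<bar>f x - P x\<bar> \<le> E)"
    using approx[OF assms] unfolding poly_approx_on_def by blast
  from someI_ex[OF this] show "coordwise_poly d D (local_poly f \<nu>)"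
    "\<And>x. x \<in> coord_box d (center \<nu>) (3 * \<rho>) \<Longrightarrow> \<bar>f x - local_poly f \<nu> x\<bar> \<le> E"
    unfolding local_poly_def by blast+
qed

lemma interpolant_spec:
  assumes "coordwise_poly d D P" "\<And>t. t \<in> nodes \<Longrightarrow> \<bar>P (node \<nu> t) - \<eta> * of_int (m t)\<bar> \<le> \<eta> / 2"
  shows "coordwise_poly d D (interpolant \<nu> m)"
    "\<And>t. t \<in> nodes \<Longrightarrow> \<bar>interpolant \<nu> m (node \<nu> t) - \<eta> * of_int (m t)\<bar> \<le> \<eta> / 2"
proof -
  have "\<exists>Q. coordwise_poly d D Q \<and> (\<forall>t\<in>nodes. \<bar>Q (node \<nu> t) - \<eta> * of_int (m t)\<bar> \<le> \<eta> / 2)"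
    using assms by blast
  from someI_ex[OF this] show "coordwise_poly d D (interpolant \<nu> m)"
    "\<And>t. t \<in> nodes \<Longrightarrow> \<bar>interpolant \<nu> m (node \<nu> t) - \<eta> * of_int (m t)\<bar> \<le> \<eta> / 2"
    unfolding interpolant_def by blast+
qed

lemma interpolant_quantize_close:
  assumes "f \<in> F" "\<nu> \<in> cells" "x \<in> coord_box d (center \<nu>) (3 * \<rho>)"
  shows "\<bar>interpolant \<nu> (quantize f \<nu>) x - local_poly f \<nu> x\<bar> \<le> lagrange_const D ^ d * \<eta>"
proof -
  let ?Q = "interpolant \<nu> (quantize f \<nu>)" and ?P = "local_poly f \<nu>"
  have rounding: "\<bar>?P (node \<nu> t) - \<eta> * of_int (quantize f \<nu> t)\<bar> \<le> \<eta> / 2" if "t \<in> nodes" for t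
    using abs_sub_round_divide_le[OF \<eta>_pos] assms(2) that by (simp add: quantize_def)
  have Q: "coordwise_poly d D ?Q"
    "\<And>t. t \<in> nodes \<Longrightarrow> \<bar>?Q (node \<nu> t) - \<eta> * of_int (quantize f \<nu> t)\<bar> \<le> \<eta> / 2"
    using interpolant_spec[of ?P \<nu> "quantize f \<nu>"] local_poly_spec(1)[OF assms(1)] rounding by blast+
  have "coordwise_poly d D (\<lambda>x. ?Q x + (-1) * ?P x)"
    by (intro coordwise_poly_add coordwise_poly_cmult Q(1) local_poly_spec(1)[OF assms(1)])
  then have "\<bar>?Q x + (-1) * ?P x\<bar> \<le> lagrange_const D ^ d * \<eta>"
  proof (rule coordwise_poly_abs_le_on_box[OF _ D_ge_1 \<rho>_pos _ assms(3)])
    fix t assume "t \<in> {1..d} \<rightarrow>\<^sub>E {..D}"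
    then have "t \<in> nodes" by (simp add: nodes_def)
    then show "\<bar>?Q (grid_node D \<rho> (center \<nu>) t) + (-1) * ?P (grid_node D \<rho> (center \<nu>) t)\<bar> \<le> \<eta>"
      using Q(2)[OF \<open>t \<in> nodes\<close>] rounding[OF \<open>t \<in> nodes\<close>] unfolding node_def by linarith
  qed
  then show ?thesis by simp
qed

lemma n_cells_ge_1: "n_cells \<ge> 1"
  using \<alpha>_pos \<rho>_pos unfolding n_cells_def by (simp add: Suc_le_eq)

lemma cell_of_spec:
  assumes x: "\<forall>j\<in>{1..d}. \<bar>x j\<bar> \<le> \<alpha>"
  shows "cell_of x \<in> cells" "x \<in> coord_box d (center (cell_of x)) \<rho>"
proof -
  show "cell_of x \<in> cells" unfolding cell_of_def cells_def using n_cells_ge_1 by auto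
  show "x \<in> coord_box d (center (cell_of x)) \<rho>"
    unfolding coord_box_def mem_Collect_eq
  proof
    fix j assume j: "j \<in> {1..d}"
    define z where "z = (x j + \<alpha>) / (2 * \<rho>)"
    have "\<bar>x j\<bar> \<le> \<alpha>" using x j by blast
    then have "0 \<le> z" using \<rho>_pos by (simp add: z_def)
    have "x j + \<alpha> \<le> 2 * \<alpha>" using \<open>\<bar>x j\<bar> \<le> \<alpha>\<close> by simp
    then have "z \<le> 2 * \<alpha> / (2 * \<rho>)" unfolding z_def using \<rho>_pos by (intro divide_right_mono) auto
    also have "\<dots> = \<alpha> / \<rho>" by simp
    also have "\<dots> \<le> real n_cells" unfolding n_cells_def by linarith
    finally have "z \<le> real n_cells" .
    have "0 \<le> z - real (cell_of x j) \<and> z - real (cell_of x j) \<le> 1"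
      using j \<open>0 \<le> z\<close> \<open>z \<le> real n_cells\<close> n_cells_ge_1
      by (auto simp: cell_of_def z_def[symmetric] min_def of_nat_diff) linarith+
    moreover have "x j - center (cell_of x) j = 2 * \<rho> * (z - real (cell_of x j)) - \<rho>"
      using \<rho>_pos by (simp add: center_def z_def field_simps)
    moreover have "0 \<le> 2 * \<rho> * (z - real (cell_of x j))" "2 * \<rho> * (z - real (cell_of x j)) \<le> 2 * \<rho>"
      using calculation(1) \<rho>_pos mult_left_mono[of "z - real (cell_of x j)" 1 "2 * \<rho>"] by auto
    ultimately show "\<bar>x j - center (cell_of x) j\<bar> \<le> \<rho>" by (simp add: abs_le_iff)
  qed
qed

lemma decode_quantize_close:
  assumes "f \<in> F" "\<forall>j\<in>{1..d}. \<bar>x j\<bar> \<le> \<alpha>"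
  shows "\<bar>f x - decode (quantize f) x\<bar> \<le> E + lagrange_const D ^ d * \<eta>"
proof -
  have "x \<in> coord_box d (center (cell_of x)) (3 * \<rho>)"
    using cell_of_spec(2)[OF assms(2)] \<rho>_pos by (elim coord_box_mono) simp
  then show ?thesis
    using local_poly_spec(2)[OF assms(1)] interpolant_quantize_close[OF assms(1) cell_of_spec(1)[OF assms(2)]]
    unfolding decode_def by fastforce
qed

lemma root_cell_in_cells: "root_cell \<in> cells"
  unfolding root_cell_def cells_def using n_cells_ge_1 by auto

lemma parent_axis:
  assumes "\<nu> \<in> cells" "\<nu> \<noteq> root_cell"
  shows "parent_axis \<nu> \<in> {1..d}" "0 < \<nu> (parent_axis \<nu>)"
proof -
  have "\<exists>j. j \<in> {1..d} \<and> 0 < \<nu> j"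
  proof (rule ccontr)
    assume "\<not> ?thesis"
    then have "\<nu> = root_cell"
      using assms(1) unfolding cells_def root_cell_def by (auto simp: PiE_iff extensional_def)
    then show False using assms(2) by simp
  qed
  from LeastI_ex[OF this] show "parent_axis \<nu> \<in> {1..d}" "0 < \<nu> (parent_axis \<nu>)"
    unfolding parent_axis_def by auto
qed

lemma parent_in_cells:
  assumes "\<nu> \<in> cells" "\<nu> \<noteq> root_cell"
  shows "parent \<nu> \<in> cells"
proof -
  have "\<nu> (parent_axis \<nu>) < n_cells"
    using PiE_mem[OF assms(1)[unfolded cells_def] parent_axis(1)[OF assms]] by simp
  then have "\<nu> (parent_axis \<nu>) - 1 < n_cells" by simp
  then show ?thesis
    using assms parent_axis(1)[OF assms] unfolding parent_def cells_def
    by (auto simp: PiE_iff extensional_def)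
qed

lemma sum_parent_less:
  assumes "\<nu> \<in> cells" "\<nu> \<noteq> root_cell"
  shows "sum (parent \<nu>) {1..d} < sum \<nu> {1..d}"
proof -
  note j = parent_axis[OF assms]
  have "sum (parent \<nu>) {1..d} = parent \<nu> (parent_axis \<nu>) + sum \<nu> ({1..d} - {parent_axis \<nu>})"
    using j by (simp add: sum.remove parent_def)
  also have "\<dots> < \<nu> (parent_axis \<nu>) + sum \<nu> ({1..d} - {parent_axis \<nu>})"
    using j by (simp add: parent_def)
  also have "\<dots> = sum \<nu> {1..d}" using j by (simp add: sum.remove)
  finally show ?thesis .
qed

lemma cell_box_subset_parent_box:
  assumes "\<nu> \<in> cells" "\<nu> \<noteq> root_cell" "x \<in> coord_box d (center \<nu>) \<rho>"
  shows "x \<in> coord_box d (center (parent \<nu>)) (3 * \<rho>)"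
proof -
  have "\<bar>center \<nu> j - center (parent \<nu>) j\<bar> \<le> 2 * \<rho>" for j
    using parent_axis[OF assms(1,2)] \<rho>_pos by (auto simp: parent_def center_def of_nat_diff algebra_simps)
  then show ?thesis
    using assms(3) unfolding coord_box_def by (smt (verit) mem_Collect_eq)
qed

lemma node_in_cell_box: "t \<in> nodes \<Longrightarrow> node \<nu> t \<in> coord_box d (center \<nu>) \<rho>"
  unfolding node_def nodes_def using grid_node_in_coord_box D_ge_1 \<rho>_pos by blast

lemma quantize_root_range:
  assumes "f \<in> F" "t \<in> nodes"
  shows "quantize f root_cell t \<in> {- int root_range..int root_range}"
proof -
  let ?y = "node root_cell t"
  have "?y \<in> coord_box d (center root_cell) (3 * \<rho>)"
    using coord_box_mono[OF node_in_cell_box[OF assms(2)], of "3 * \<rho>"] \<rho>_pos by simp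
  then have "\<bar>local_poly f root_cell ?y\<bar> \<le> Fb + E"
    using local_poly_spec(2)[OF assms(1)] bounded[OF assms(1), of ?y] by fastforce
  then have "\<bar>local_poly f root_cell ?y / \<eta>\<bar> \<le> (Fb + E) / \<eta>"
    using \<eta>_pos by (simp add: divide_right_mono)
  then have "\<bar>real_of_int (round (local_poly f root_cell ?y / \<eta>))\<bar> \<le> (Fb + E) / \<eta> + 1"
    using of_int_round_abs_le[of "local_poly f root_cell ?y / \<eta>"] by linarith
  then have "round (local_poly f root_cell ?y / \<eta>) \<in> {- int root_range..int root_range}"
    unfolding root_range_def by (rule mem_nat_ceiling_range)
  then show ?thesis using assms root_cell_in_cells by (simp add: quantize_def)
qed

lemma quantize_step_range:
  assumes f: "f \<in> F" and \<nu>: "\<nu> \<in> cells" "\<nu> \<noteq> root_cell" and t: "t \<in> nodes"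
  shows "quantize f \<nu> t - predicted (quantize f) \<nu> t \<in> {- int step_range..int step_range}"
proof -
  let ?y = "node \<nu> t" and ?p = "parent \<nu>"
  have y\<nu>: "?y \<in> coord_box d (center \<nu>) (3 * \<rho>)"
    using coord_box_mono[OF node_in_cell_box[OF t], of "3 * \<rho>"] \<rho>_pos by simp
  have yp: "?y \<in> coord_box d (center ?p) (3 * \<rho>)"
    using cell_box_subset_parent_box[OF \<nu> node_in_cell_box[OF t]] .
  have "\<bar>local_poly f \<nu> ?y - interpolant ?p (quantize f ?p) ?y\<bar> \<le> 2 * E + lagrange_const D ^ d * \<eta>"
    using local_poly_spec(2)[OF f y\<nu>] local_poly_spec(2)[OF f yp]
      interpolant_quantize_close[OF f parent_in_cells[OF \<nu>] yp] by linarith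
  then have "\<bar>local_poly f \<nu> ?y - interpolant ?p (quantize f ?p) ?y\<bar> / \<eta>
      \<le> (2 * E + lagrange_const D ^ d * \<eta>) / \<eta>"
    using \<eta>_pos by (simp add: divide_right_mono)
  then have "\<bar>local_poly f \<nu> ?y / \<eta> - interpolant ?p (quantize f ?p) ?y / \<eta>\<bar>
      \<le> 2 * E / \<eta> + lagrange_const D ^ d"
    using \<eta>_pos by (simp add: diff_divide_distrib[symmetric] add_divide_distrib)
  then show ?thesis
    using abs_round_diff_le[of "local_poly f \<nu> ?y / \<eta>" "interpolant ?p (quantize f ?p) ?y / \<eta>"] \<nu> t
    unfolding quantize_def predicted_def step_range_def
    by (intro mem_nat_ceiling_range) simp
qed

lemma encode_quantize_in_code_space: "f \<in> F \<Longrightarrow> encode (quantize f) \<in> code_space"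
  using quantize_root_range quantize_step_range
  unfolding encode_def code_space_def by (simp add: restrict_PiE_iff)

lemma quantize_eqI:
  "\<nu> \<in> cells \<Longrightarrow> (\<And>t. t \<in> nodes \<Longrightarrow> quantize f \<nu> t = quantize g \<nu> t) \<Longrightarrow> quantize f \<nu> = quantize g \<nu>"
  by (auto simp: quantize_def fun_eq_iff)

lemma inj_on_encode: "inj_on encode (quantize ` F)"
proof (rule inj_onI)
  fix q1 q2 assume "q1 \<in> quantize ` F" "q2 \<in> quantize ` F" "encode q1 = encode q2"
  then obtain f g where q: "q1 = quantize f" "q2 = quantize g"
    and eq: "encode (quantize f) = encode (quantize g)" by blast
  have "quantize f \<nu> = quantize g \<nu>" if "\<nu> \<in> cells" for \<nu>
    using that
  proof (induction "sum \<nu> {1..d}" arbitrary: \<nu> rule: less_induct)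
    case less
    show ?case
    proof (rule quantize_eqI[OF less.prems])
      fix t assume t: "t \<in> nodes"
      show "quantize f \<nu> t = quantize g \<nu> t"
      proof (cases "\<nu> = root_cell")
        case True
        then show ?thesis using fun_cong[OF arg_cong[OF eq, of fst], of t] t by (simp add: encode_def)
      next
        case False
        then have "quantize f (parent \<nu>) = quantize g (parent \<nu>)"
          using less.hyps sum_parent_less parent_in_cells less.prems by blast
        then have "predicted (quantize f) \<nu> t = predicted (quantize g) \<nu> t"
          by (simp add: predicted_def)
        then show ?thesis
          using fun_cong[OF fun_cong[OF arg_cong[OF eq, of snd]], of \<nu> t] less.prems False t
          by (simp add: encode_def)
      qed
    qed
  qed
  then show "q1 = q2" unfolding q by (auto simp: quantize_def fun_eq_iff)
qed

lemma card_code_space: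
  "card code_space = (2 * root_range + 1) ^ ((D + 1) ^ d) * (2 * step_range + 1) ^ ((D + 1) ^ d * n_cells ^ d)"
proof -
  have card_int: "card {- int n..int n} = 2 * n + 1" for n by (simp add: nat_eq_iff)
  have fin: "finite nodes" "finite cells" by (simp_all add: nodes_def cells_def finite_PiE)
  have card: "card nodes = (D + 1) ^ d" "card cells = n_cells ^ d"
    by (simp_all add: nodes_def cells_def card_PiE prod_constant)
  have "card code_space = card (nodes \<rightarrow>\<^sub>E {- int root_range..int root_range})
      * card (cells \<rightarrow>\<^sub>E nodes \<rightarrow>\<^sub>E {- int step_range..int step_range})"
    unfolding code_space_def by (rule card_cartesian_product)
  also have "card (nodes \<rightarrow>\<^sub>E {- int root_range..int root_range}) = (2 * root_range + 1) ^ ((D + 1) ^ d)"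
    using fin by (simp only: card_PiE prod_constant card card_int)
  also have "card (cells \<rightarrow>\<^sub>E nodes \<rightarrow>\<^sub>E {- int step_range..int step_range})
      = ((2 * step_range + 1) ^ ((D + 1) ^ d)) ^ (n_cells ^ d)"
    using fin by (simp only: card_PiE prod_constant card card_int)
  finally show ?thesis by (simp add: power_mult)
qed

lemma uniform_cover:
  obtains H where "finite H"
    "card H \<le> (2 * root_range + 1) ^ ((D + 1) ^ d) * (2 * step_range + 1) ^ ((D + 1) ^ d * n_cells ^ d)"
    "\<And>f. f \<in> F \<Longrightarrow> \<exists>h\<in>H. \<forall>x. (\<forall>j\<in>{1..d}. \<bar>x j\<bar> \<le> \<alpha>) \<longrightarrow> \<bar>f x - h x\<bar> \<le> E + lagrange_const D ^ d * \<eta>"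
proof -
  have "finite code_space" by (simp add: code_space_def nodes_def cells_def finite_PiE)
  moreover have "encode ` quantize ` F \<subseteq> code_space" using encode_quantize_in_code_space by blast
  ultimately have "finite (quantize ` F)" "card (quantize ` F) \<le> card code_space"
    using finite_imageD[OF finite_subset inj_on_encode] card_mono card_image[OF inj_on_encode]
    by metis+
  then have "finite (decode ` quantize ` F)" "card (decode ` quantize ` F) \<le> card code_space"
    using card_image_le[of "quantize ` F" decode] by simp_all
  then show ?thesis
    using that[of "decode ` quantize ` F"] decode_quantize_close card_code_space by fastforce
qed

end

section \<open>Empirical covering numbers\<close>

lemma covering_number_le_card_uniform_cover:
  assumes "finite H" and approx: "\<And>g. g \<in> G \<Longrightarrow> \<exists>h\<in>H. \<forall>x. \<bar>g x - h x\<bar> \<le> \<delta>"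
    and "0 \<le> \<delta>" "\<delta> < \<epsilon>" "n \<ge> 1" "p \<ge> 1"
  shows "(\<exists>N gs. is_Lp_cover p \<epsilon> G n xs N gs) \<and> covering_number p \<epsilon> G n xs \<le> card H"
proof -
  obtain hs where hs: "bij_betw hs {0..<card H} H" using ex_bij_betw_nat_finite[OF assms(1)] by blast
  have "is_Lp_cover p \<epsilon> G n xs (card H) hs"
    unfolding is_Lp_cover_def
  proof
    fix g assume "g \<in> G"
    then obtain h where h: "h \<in> H" "\<forall>x. \<bar>g x - h x\<bar> \<le> \<delta>" using approx by blast
    then obtain i where i: "i < card H" "\<forall>x. \<bar>g x - hs i x\<bar> \<le> \<delta>"
      using hs unfolding bij_betw_def by force
    have "(\<Sum>m=1..n. \<bar>g (xs m) - hs i (xs m)\<bar> powr p) \<le> (\<Sum>m=1..n. \<delta> powr p)"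
      using i(2) assms(6) by (intro sum_mono powr_mono2) auto
    then have "(1 / real n) * (\<Sum>m=1..n. \<bar>g (xs m) - hs i (xs m)\<bar> powr p) \<le> (1 / real n) * (real n * \<delta> powr p)"
      by (intro mult_left_mono) auto
    also have "\<dots> = \<delta> powr p" using assms(5) by simp
    finally have "((1 / real n) * (\<Sum>m=1..n. \<bar>g (xs m) - hs i (xs m)\<bar> powr p)) powr (1 / p)
        \<le> (\<delta> powr p) powr (1 / p)"
      using assms(6) by (intro powr_mono2) (auto intro!: sum_nonneg divide_nonneg_nonneg)
    also have "\<dots> = \<delta>" using assms(3,6) by (simp add: powr_powr)
    finally show "\<exists>i<card H. ((1 / real n) * (\<Sum>m=1..n. \<bar>g (xs m) - hs i (xs m)\<bar> powr p)) powr (1 / p) < \<epsilon>"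
      using i(1) assms(4) by force
  qed
  moreover from this have "covering_number p \<epsilon> G n xs \<le> card H"
    unfolding covering_number_def by (blast intro: Least_le)
  ultimately show ?thesis by blast
qed

lemma trunc_beta_lipschitz: "\<bar>trunc_beta \<beta> a - trunc_beta \<beta> b\<bar> \<le> \<bar>a - b\<bar>"
  unfolding trunc_beta_def by (auto simp: max_def min_def abs_if)

lemma covering_number_trunc_cube_le:
  fixes \<beta> :: real
  assumes "finite H"
    and approx: "\<And>f. f \<in> F \<Longrightarrow> \<exists>h\<in>H. \<forall>x. (\<forall>j\<in>{1..d}. \<bar>x j\<bar> \<le> \<alpha>) \<longrightarrow> \<bar>f x - h x\<bar> \<le> \<delta>"
    and "0 \<le> \<delta>" "\<delta> < \<epsilon>" "n \<ge> 1" "p \<ge> 1"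
  defines "G \<equiv> {(\<lambda>x. trunc_beta \<beta> (f x) * cube_ind \<alpha> d x) | f. f \<in> F}"
  shows "(\<exists>N gs. is_Lp_cover p \<epsilon> G n xs N gs) \<and> covering_number p \<epsilon> G n xs \<le> card H"
proof -
  let ?T = "\<lambda>h x. trunc_beta \<beta> (h x) * cube_ind \<alpha> d x"
  have "\<exists>h'\<in>?T ` H. \<forall>x. \<bar>g x - h' x\<bar> \<le> \<delta>" if "g \<in> G" for g
  proof -
    obtain f h where "g = ?T f" "h \<in> H" "\<forall>x. (\<forall>j\<in>{1..d}. \<bar>x j\<bar> \<le> \<alpha>) \<longrightarrow> \<bar>f x - h x\<bar> \<le> \<delta>"
      using \<open>g \<in> G\<close> approx unfolding G_def by blast
    then show ?thesis
      using trunc_beta_lipschitz[of \<beta>] \<open>0 \<le> \<delta>\<close> by (intro bexI[of _ "?T h"]) (auto simp: cube_ind_def intro: order_trans)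
  qed
  then have "(\<exists>N gs. is_Lp_cover p \<epsilon> G n xs N gs) \<and> covering_number p \<epsilon> G n xs \<le> card (?T ` H)"
    using assms(1,3-6) by (intro covering_number_le_card_uniform_cover) auto
  then show ?thesis using card_image_le[OF assms(1), of ?T] by (meson order_trans)
qed

section \<open>The entropy bound for networks\<close>

lemma ln_le_powr_divide:
  fixes x s :: real
  assumes "x > 0" "s > 0"
  shows "ln x \<le> x powr s / s"
proof -
  have "ln (x powr s) \<le> x powr s - 1" using assms by (intro ln_le_minus_one) simp
  then have "s * ln x \<le> x powr s" using assms by (simp add: ln_powr)
  then show ?thesis using assms by (simp add: field_simps)
qed

lemma card_power_bound_le_exp:
  fixes N a b P m d k :: nat and c1 c3 Y Q :: real
  assumes "N \<le> a ^ P * b ^ (P * m)" "a \<ge> 1" "b \<ge> 1"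
    and "real m \<le> c1 * Y" "real a \<le> c3 * Q" "Q > 0" "c3 > 0" "Q powr (real d / real k) \<le> Y"
    and "d \<ge> 1" "k \<ge> 1"
  shows "real N \<le> exp (real P * (real k / real d + c1 * ln (real b)) * Y + real P * ln c3)"
proof -
  have "ln (real a) \<le> ln (c3 * Q)" using assms(2,5) by simp
  also have "\<dots> = ln c3 + ln Q" using assms(6,7) by (simp add: ln_mult)
  also have "ln Q \<le> real k / real d * Q powr (real d / real k)"
    using ln_le_powr_divide[of Q "real d / real k"] assms(6,9,10) by (simp add: mult.commute)
  also have "\<dots> \<le> real k / real d * Y" using assms(8) by (intro mult_left_mono) auto
  finally have a: "ln (real a) \<le> ln c3 + real k / real d * Y" by simp
  have b: "real m * ln (real b) \<le> c1 * Y * ln (real b)"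
    using assms(3,4) by (intro mult_right_mono) auto
  have "ln (real (a ^ P * b ^ (P * m))) = real P * ln (real a) + real P * (real m * ln (real b))"
    using assms(2,3) by (simp add: ln_mult ln_realpow)
  also have "\<dots> \<le> real P * (ln c3 + real k / real d * Y) + real P * (c1 * Y * ln (real b))"
    using a b by (intro add_mono mult_left_mono) auto
  also have "\<dots> = real P * (real k / real d + c1 * ln (real b)) * Y + real P * ln c3"
    by (simp add: algebra_simps)
  moreover have "0 < real (a ^ P * b ^ (P * m))" using assms(2,3) by simp
  ultimately have "real (a ^ P * b ^ (P * m)) \<le> exp (real P * (real k / real d + c1 * ln (real b)) * Y + real P * ln c3)"
    by (metis exp_le_cancel_iff exp_ln order.trans)
  moreover have "real N \<le> real (a ^ P * b ^ (P * m))" using assms(1) by (simp only: of_nat_le_iff)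
  ultimately show ?thesis by linarith
qed

locale network_setting = bounded_derivatives \<sigma> Dd k M for \<sigma> Dd k M +
  fixes d r L :: nat
  assumes d_ge_1: "d \<ge> 1" and r_ge_1: "r \<ge> 1" and L_ge_1: "L \<ge> 1"
begin

definition "deg = k ^ L"
definition "lam = lagrange_const deg ^ d"
definition "err_const = max M (unit_err_const M d r k L)"
definition "step_bound = nat \<lceil>1 + 3 * lam\<rceil>"
definition "cells_factor = 6 ^ d * (4 * err_const) powr (real d / real k)"
definition "root_factor = 8 * lam * M + (2 * lam + 5) * (4 * err_const)"
definition "entropy_slope =
  real ((deg + 1) ^ d) * (real k / real d + cells_factor * ln (real (2 * step_bound + 1)))"
definition "entropy_offset = real ((deg + 1) ^ d) * ln root_factor + 1"

definition net_complexity :: "real \<Rightarrow> real \<Rightarrow> real \<Rightarrow> real \<Rightarrow> real \<Rightarrow> real" where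
  "net_complexity \<alpha> A B C \<epsilon> = \<alpha> ^ d * B ^ ((L - 1) * d) * A ^ d * (C / \<epsilon>) powr (real d / real k)"

lemma deg_ge_1: "deg \<ge> 1"
  using k_ge_1 by (simp add: deg_def)

lemma lam_ge_1: "lam \<ge> 1"
  using lagrange_const_ge_1[OF deg_ge_1] by (simp add: lam_def one_le_power)

lemma err_const_ge_1: "err_const \<ge> 1"
  using M_ge_1 by (simp add: err_const_def)

lemma root_factor_ge_1: "root_factor \<ge> 1"
proof -
  have "1 * 1 \<le> (2 * lam + 5) * (4 * err_const)"
    using lam_ge_1 err_const_ge_1 by (intro mult_mono) auto
  moreover have "0 \<le> 8 * lam * M" using lam_ge_1 M_ge_1 by simp
  ultimately show ?thesis unfolding root_factor_def by linarith
qed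

lemma entropy_slope_pos: "entropy_slope > 0"
  using d_ge_1 k_ge_1 err_const_ge_1 unfolding entropy_slope_def cells_factor_def
  by (intro mult_pos_pos add_pos_nonneg) auto

lemma entropy_offset_pos: "entropy_offset > 0"
  using root_factor_ge_1 by (simp add: entropy_offset_def add_nonneg_pos)

lemma net_complexity_ge:
  assumes "\<alpha> \<ge> 1" "A \<ge> 1" "B \<ge> 1"
  shows "(C / \<epsilon>) powr (real d / real k) \<le> net_complexity \<alpha> A B C \<epsilon>"
proof -
  have "1 * 1 * 1 \<le> \<alpha> ^ d * B ^ ((L - 1) * d) * A ^ d"
    using assms by (intro mult_mono) (auto simp: one_le_power)
  then show ?thesis
    unfolding net_complexity_def using mult_right_mono[of 1 _ "(C / \<epsilon>) powr (real d / real k)"] by simp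
qed

lemma net_complexity_nonneg: "\<alpha> \<ge> 1 \<Longrightarrow> A \<ge> 1 \<Longrightarrow> B \<ge> 1 \<Longrightarrow> 0 \<le> net_complexity \<alpha> A B C \<epsilon>"
  using net_complexity_ge powr_ge_zero order_trans by blast

lemma net_class_abs_le: "f \<in> net_class \<sigma> d r L K A B C \<Longrightarrow> \<bar>f x\<bar> \<le> C * M"
  using nn_net_abs_le L_ge_1 unfolding net_class_def by blast

lemma net_class_poly_approx_on:
  assumes "f \<in> net_class \<sigma> d r L K A B C" "A \<ge> 1" "B \<ge> 1" "C \<ge> 1" "\<rho> > 0"
    and "A * B ^ (L - 1) * \<rho> \<le> 1" "C * err_const * (A * B ^ (L - 1) * \<rho>) ^ k \<le> e"
  shows "poly_approx_on d deg (coord_box d c \<rho>) f e"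
proof -
  obtain w where w: "admissible_weights d r L K A B C w" "f = nn_net \<sigma> d r L K w"
    using assms(1) unfolding net_class_def by blast
  have "C * (unit_err_const M d r k L * (A * B ^ (L - 1) * \<rho>) ^ k) \<le> C * err_const * (A * B ^ (L - 1) * \<rho>) ^ k"
    using assms(2-5) by (simp add: err_const_def mult.assoc mult_left_mono mult_right_mono)
  also have "\<dots> \<le> e" by (rule assms(7))
  finally show ?thesis
    using nn_net_local_approx[OF w(1), of \<rho> c] assms(2-6) r_ge_1 L_ge_1 unfolding w(2) deg_def
    by (auto elim: poly_approx_on_mono)
qed

end

locale network_fine_scale = network_setting \<sigma> Dd k M d r L for \<sigma> Dd k M d r L +
  fixes K :: nat and \<alpha> A B C \<epsilon> :: real
  assumes \<alpha>_ge_1: "\<alpha> \<ge> 1" and A_ge_1: "A \<ge> 1" and B_ge_1: "B \<ge> 1" and C_ge_1: "C \<ge> 1"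
    and \<epsilon>_pos: "\<epsilon> > 0" and \<epsilon>_small: "\<epsilon> < 4 * C * err_const"
begin

text \<open>On boxes of radius \<open>3 * cell_radius\<close> every network is within \<open>\<epsilon>/4\<close> of a polynomial
  (\<open>side_scale\<^sup>k\<close> balances the error constant); rounding to multiples of \<open>quantum\<close> costs
  another \<open>\<epsilon>/4\<close>.\<close>

definition "side_scale = (\<epsilon> / (4 * C * err_const)) powr (1 / real k)"
definition "cell_radius = side_scale / (3 * (A * B ^ (L - 1)))"
definition "quantum = \<epsilon> / (4 * lam)"

lemma weight_scale_ge_1: "A * B ^ (L - 1) \<ge> 1"
  using A_ge_1 B_ge_1 one_le_power[of B "L - 1"] mult_mono[of 1 A 1 "B ^ (L - 1)"] by simp

lemma side_scale_pos: "side_scale > 0"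
  using \<epsilon>_pos C_ge_1 err_const_ge_1 by (simp add: side_scale_def)

lemma side_scale_le_1: "side_scale \<le> 1"
proof -
  have "\<epsilon> / (4 * C * err_const) \<le> 1" using \<epsilon>_small \<epsilon>_pos by simp
  then show ?thesis
    unfolding side_scale_def using \<epsilon>_pos C_ge_1 err_const_ge_1 powr_mono2[of "1 / real k" _ 1] by simp
qed

lemma side_scale_power: "side_scale ^ k = \<epsilon> / (4 * C * err_const)"
  using k_ge_1 \<epsilon>_pos C_ge_1 err_const_ge_1 by (simp add: side_scale_def powr_power)

lemma cell_radius_pos: "cell_radius > 0"
  using side_scale_pos weight_scale_ge_1 by (simp add: cell_radius_def)

lemma quantum_pos: "quantum > 0"
  using \<epsilon>_pos lam_ge_1 by (simp add: quantum_def)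

sublocale locally_poly_class d deg \<alpha> cell_radius quantum "\<epsilon> / 4" "C * M" "net_class \<sigma> d r L K A B C"
proof unfold_locales
  fix f c assume "f \<in> net_class \<sigma> d r L K A B C"
  moreover have "A * B ^ (L - 1) * (3 * cell_radius) = side_scale"
  proof -
    have "A * B ^ (L - 1) \<noteq> 0" using weight_scale_ge_1 by linarith
    moreover have "x * (3 * (s / (3 * x))) = s" if "x \<noteq> 0" for x s :: real using that by simp
    ultimately show ?thesis unfolding cell_radius_def by blast
  qed
  moreover have "C * err_const * side_scale ^ k = \<epsilon> / 4"
    using C_ge_1 err_const_ge_1 by (simp add: side_scale_power)
  ultimately show "poly_approx_on d deg (coord_box d c (3 * cell_radius)) f (\<epsilon> / 4)"
    using net_class_poly_approx_on[of f K A B C "3 * cell_radius" "\<epsilon> / 4" c] A_ge_1 B_ge_1 C_ge_1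
      cell_radius_pos side_scale_le_1 by simp
qed (use deg_ge_1 \<alpha>_ge_1 cell_radius_pos quantum_pos net_class_abs_le in auto)

lemma step_range_eq: "step_range = step_bound"
proof -
  have "1 + lagrange_const deg ^ d + 2 * (\<epsilon> / 4) / quantum = 1 + 3 * lam"
    using \<epsilon>_pos lam_ge_1 by (simp add: quantum_def lam_def[symmetric])
  then show ?thesis by (simp only: step_range_def step_bound_def)
qed

lemma root_range_le: "real (2 * root_range + 1) \<le> root_factor * (C / \<epsilon>)"
proof -
  define Q where "Q = C / \<epsilon>"
  have "(C * M + \<epsilon> / 4) / quantum = 4 * lam * M * Q + lam"
    using \<epsilon>_pos lam_ge_1 by (simp add: quantum_def Q_def field_simps)
  then have "real root_range \<le> 4 * lam * M * Q + lam + 2"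
    unfolding root_range_def
    using real_nat_ceiling_le[of "(C * M + \<epsilon> / 4) / quantum + 1"] C_ge_1 M_ge_1 \<epsilon>_pos lam_ge_1
    by (simp add: Q_def)
  moreover have "1 \<le> 4 * err_const * Q" using \<epsilon>_small \<epsilon>_pos by (simp add: Q_def field_simps)
  then have "2 * lam + 5 \<le> (2 * lam + 5) * (4 * err_const * Q)"
    using lam_ge_1 mult_left_mono[of 1 "4 * err_const * Q" "2 * lam + 5"] by simp
  moreover have "root_factor * Q = 8 * lam * M * Q + (2 * lam + 5) * (4 * err_const * Q)"
    by (simp add: root_factor_def algebra_simps)
  ultimately show ?thesis by (simp add: Q_def)
qed

lemma n_cells_power_le: "real (n_cells ^ d) \<le> cells_factor * net_complexity \<alpha> A B C \<epsilon>"
proof -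
  define G where "G = A * B ^ (L - 1)"
  have ratio: "\<alpha> / cell_radius = 3 * \<alpha> * G / side_scale"
    using side_scale_pos weight_scale_ge_1 by (simp add: cell_radius_def G_def)
  have "1 \<le> 3 * \<alpha> * G" using \<alpha>_ge_1 weight_scale_ge_1 mult_mono[of 1 "3 * \<alpha>" 1 G] by (simp add: G_def)
  then have "1 \<le> \<alpha> / cell_radius"
    unfolding ratio using side_scale_pos side_scale_le_1 by (simp add: le_divide_eq)
  then have "real n_cells \<le> 2 * (\<alpha> / cell_radius)"
    using real_nat_ceiling_le[of "\<alpha> / cell_radius"] unfolding n_cells_def by linarith
  moreover have "2 * (\<alpha> / cell_radius) = 6 * \<alpha> * G * (1 / side_scale)" by (simp add: ratio)
  ultimately have "real (n_cells ^ d) \<le> (6 * \<alpha> * G * (1 / side_scale)) ^ d"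
    unfolding of_nat_power by (metis of_nat_0_le_iff power_mono)
  also have "\<dots> = (6 * \<alpha> * G) ^ d * (1 / side_scale) ^ d" by (rule power_mult_distrib)
  also have "(1 / side_scale) ^ d = (4 * err_const) powr (real d / real k) * (C / \<epsilon>) powr (real d / real k)"
  proof -
    have "side_scale ^ d = (\<epsilon> / (4 * C * err_const)) powr (real d / real k)"
      using \<epsilon>_pos C_ge_1 err_const_ge_1 k_ge_1 by (simp add: side_scale_def powr_power)
    then show ?thesis
      using \<epsilon>_pos C_ge_1 err_const_ge_1 by (simp add: power_one_over powr_divide powr_mult)
  qed
  also have "(6 * \<alpha> * G) ^ d = 6 ^ d * (\<alpha> ^ d * B ^ ((L - 1) * d) * A ^ d)"
    by (simp add: G_def power_mult_distrib power_mult[symmetric] mult.commute mult.left_commute)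
  finally show ?thesis by (simp add: cells_factor_def net_complexity_def mult_ac)
qed

lemma uniform_cover_le_exp:
  obtains H where "finite H"
    "real (card H) \<le> exp (entropy_slope * net_complexity \<alpha> A B C \<epsilon> + entropy_offset)"
    "\<And>f. f \<in> net_class \<sigma> d r L K A B C \<Longrightarrow>
       \<exists>h\<in>H. \<forall>x. (\<forall>j\<in>{1..d}. \<bar>x j\<bar> \<le> \<alpha>) \<longrightarrow> \<bar>f x - h x\<bar> \<le> \<epsilon> / 2"
proof -
  obtain H where H: "finite H"
    "card H \<le> (2 * root_range + 1) ^ ((deg + 1) ^ d) * (2 * step_bound + 1) ^ ((deg + 1) ^ d * n_cells ^ d)"
    "\<And>f. f \<in> net_class \<sigma> d r L K A B C \<Longrightarrow>
       \<exists>h\<in>H. \<forall>x. (\<forall>j\<in>{1..d}. \<bar>x j\<bar> \<le> \<alpha>) \<longrightarrow> \<bar>f x - h x\<bar> \<le> \<epsilon> / 4 + lagrange_const deg ^ d * quantum"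
    using uniform_cover step_range_eq by metis
  have "\<epsilon> / 4 + lagrange_const deg ^ d * quantum = \<epsilon> / 2"
    using lam_ge_1 by (simp add: quantum_def lam_def[symmetric])
  moreover have "real (card H) \<le> exp (entropy_slope * net_complexity \<alpha> A B C \<epsilon> + (entropy_offset - 1))"
    using card_power_bound_le_exp[OF H(2) _ _ n_cells_power_le root_range_le _ _
        net_complexity_ge[OF \<alpha>_ge_1 A_ge_1 B_ge_1] d_ge_1 k_ge_1]
      \<epsilon>_pos C_ge_1 root_factor_ge_1
    by (simp add: entropy_slope_def entropy_offset_def mult_ac)
  then have "real (card H) \<le> exp (entropy_slope * net_complexity \<alpha> A B C \<epsilon> + entropy_offset)"
    by (smt (verit) exp_le_cancel_iff)
  ultimately show ?thesis
    using that[OF H(1)] H(3) by presburger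
qed

end

lemma exp_le_ratio_powr:
  fixes \<epsilon> \<beta> p t :: real
  assumes "0 < \<epsilon>" "\<epsilon> \<le> \<beta>" "p \<ge> 0" "t \<ge> 0"
  shows "exp t \<le> (exp 1 * \<beta> powr p / \<epsilon> powr p) powr t"
proof -
  have "1 \<le> \<beta> powr p / \<epsilon> powr p" using assms powr_mono2[of p \<epsilon> \<beta>] by simp
  then have "exp 1 \<le> exp 1 * \<beta> powr p / \<epsilon> powr p"
    using mult_left_mono[of 1 "\<beta> powr p / \<epsilon> powr p" "exp 1"] by simp
  then have "exp 1 powr t \<le> (exp 1 * \<beta> powr p / \<epsilon> powr p) powr t"
    using assms(4) by (intro powr_mono2) auto
  then show ?thesis by (simp add: powr_def)
qed

context network_setting
begin

lemma net_class_uniform_cover: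
  assumes "\<alpha> \<ge> 1" "A \<ge> 1" "B \<ge> 1" "C \<ge> 1" "\<epsilon> > 0"
  obtains H where "finite H"
    "real (card H) \<le> exp (entropy_slope * net_complexity \<alpha> A B C \<epsilon> + entropy_offset)"
    "\<And>f. f \<in> net_class \<sigma> d r L K A B C \<Longrightarrow>
       \<exists>h\<in>H. \<forall>x. (\<forall>j\<in>{1..d}. \<bar>x j\<bar> \<le> \<alpha>) \<longrightarrow> \<bar>f x - h x\<bar> \<le> \<epsilon> / 2"
proof (cases "\<epsilon> < 4 * C * err_const")
  case True
  then interpret network_fine_scale \<sigma> Dd k M d r L K \<alpha> A B C \<epsilon>
    using assms by unfold_locales auto
  show ?thesis by (rule uniform_cover_le_exp) (rule that)
next
  case False
  have "\<bar>f x - 0\<bar> \<le> \<epsilon> / 2" if "f \<in> net_class \<sigma> d r L K A B C" for f x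
  proof -
    have "C * M \<le> C * err_const" using assms(4) by (intro mult_left_mono) (auto simp: err_const_def)
    then have "\<bar>f x\<bar> \<le> C * err_const" using net_class_abs_le[OF that, of x] by linarith
    then show ?thesis using False assms(5) by simp
  qed
  moreover have "real (card {\<lambda>x. 0}) \<le> exp (entropy_slope * net_complexity \<alpha> A B C \<epsilon> + entropy_offset)"
    using net_complexity_nonneg[OF assms(1-3)] entropy_slope_pos entropy_offset_pos by simp
  ultimately show ?thesis by (intro that[of "{\<lambda>x. 0}"]) auto
qed

lemma covering_number_trunc_net_class_le:
  fixes K :: nat
  assumes "n \<ge> 1" "\<alpha> \<ge> 1" "A \<ge> 1" "B \<ge> 1" "C \<ge> 1" "0 < \<epsilon>" "\<epsilon> < \<beta>" "p \<ge> 1"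
  defines "G \<equiv> {(\<lambda>x. trunc_beta \<beta> (f x) * cube_ind \<alpha> d x) | f. f \<in> net_class \<sigma> d r L K A B C}"
  shows "(\<exists>N gs. is_Lp_cover p \<epsilon> G n xs N gs) \<and> real (covering_number p \<epsilon> G n xs)
    \<le> (exp 1 * \<beta> powr p / \<epsilon> powr p) powr (entropy_slope * net_complexity \<alpha> A B C \<epsilon> + entropy_offset)"
proof -
  obtain H where H: "finite H"
    "real (card H) \<le> exp (entropy_slope * net_complexity \<alpha> A B C \<epsilon> + entropy_offset)"
    "\<And>f. f \<in> net_class \<sigma> d r L K A B C \<Longrightarrow>
       \<exists>h\<in>H. \<forall>x. (\<forall>j\<in>{1..d}. \<bar>x j\<bar> \<le> \<alpha>) \<longrightarrow> \<bar>f x - h x\<bar> \<le> \<epsilon> / 2"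
    using net_class_uniform_cover[OF assms(2-6)] by blast
  have cover: "(\<exists>N gs. is_Lp_cover p \<epsilon> G n xs N gs) \<and> covering_number p \<epsilon> G n xs \<le> card H"
    unfolding G_def using assms by (intro covering_number_trunc_cube_le[OF H(1,3)]) auto
  have "exp (entropy_slope * net_complexity \<alpha> A B C \<epsilon> + entropy_offset)
      \<le> (exp 1 * \<beta> powr p / \<epsilon> powr p) powr (entropy_slope * net_complexity \<alpha> A B C \<epsilon> + entropy_offset)"
    using assms net_complexity_nonneg[OF assms(2-4)] entropy_slope_pos entropy_offset_pos
    by (intro exp_le_ratio_powr) auto
  then show ?thesis using cover H(2) by (meson of_nat_le_iff order_trans)
qed

end

theorem lemma4:
  fixes d r L k :: nat and \<sigma> :: "real \<Rightarrow> real" and p :: real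
  assumes "d \<ge> 1" "r \<ge> 1" "L \<ge> 1" "k \<ge> 1"
    and "smooth_bounded_derivs k \<sigma>"
    and "1 \<le> p"
  shows "\<exists>c11 c12 c13 :: real. c11 > 0 \<and> c12 > 0 \<and> c13 > 0 \<and>
    (\<forall>(n::nat) (K::nat) (\<alpha>::real) (\<beta>::real) (A::real) (B::real) (C::real) (\<epsilon>::real)
       (xs :: nat \<Rightarrow> nat \<Rightarrow> real).
      n \<ge> 1 \<longrightarrow> K \<ge> 1 \<longrightarrow> \<alpha> \<ge> 1 \<longrightarrow> \<beta> > 0 \<longrightarrow> A \<ge> 1 \<longrightarrow> B \<ge> 1 \<longrightarrow> C \<ge> 1 \<longrightarrow>
      0 < \<epsilon> \<longrightarrow> \<epsilon> < \<beta> \<longrightarrow>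
      (let G = {(\<lambda>x. trunc_beta \<beta> (f x) * cube_ind \<alpha> d x) | f. f \<in> net_class \<sigma> d r L K A B C}
       in (\<exists>N gs. is_Lp_cover p \<epsilon> G n xs N gs) \<and>
          real (covering_number p \<epsilon> G n xs)
            \<le> (c11 * \<beta> powr p / \<epsilon> powr p) powr
                (c12 * \<alpha> ^ d * B ^ ((L - 1) * d) * A ^ d * (C / \<epsilon>) powr (real d / real k) + c13)))"
proof -
  obtain Dd M where "bounded_derivatives \<sigma> Dd k M"
    using smooth_bounded_derivs_obtain_bound[OF assms(5,4)] .
  then interpret network_setting \<sigma> Dd k M d r L
    using assms(1-3) by (simp add: network_setting_def network_setting_axioms_def)
  show ?thesis
    using covering_number_trunc_net_class_le assms(6) entropy_slope_pos entropy_offset_pos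
    by (intro exI[of _ "exp 1"] exI[of _ entropy_slope] exI[of _ entropy_offset])
      (simp add: net_complexity_def mult.assoc Let_def)
qed

end
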